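(* Let $p\in(0,1]$. Let $Q=(q_{j,k})_{j,k\geq 0}$ be the generator on $\mathbb N_0$ with $q_{j,j+1}=jp$, $q_{j,k}=\binom{j}{k}p^k(1-p)^{j-k}$ for $0\leq k\leq j-1$, $q_{j,j}=-(jp+1-p^j)$, and $q_{j,k}=0$ otherwise, and let $(D_t)_{t\geq0}$ be a continuous-time Markov chain with generator $Q$. Let $\bar Q=(\bar q_{j,k})_{j,k\geq1}$ be the generator on $\mathbb N=\{1,2,\dots\}$ with $\bar q_{j,k}=\binom{j-1}{k-1}p^k(1-p)^{j-k}$ for $1\leq k\leq j-1$, $\bar q_{j,j+1}=(j+1)p$, $\bar q_{j,j}=p^j-(2+j)p$, and $\bar q_{j,k}=0$ otherwise. Suppose $\bar Q$ defines a positive recurrent Markov chain, with stationary distribution $u=(u_k)_{k\geq1}$; set $m_k=u_k/k$ and $a_k=m_k/\sum_{i\geq1}m_i$. Then for any $j,k\geq1$, $$\lim_{t\to\infty}\mathbb P(D_t=k\mid D_0=j)\,e^{(1-2p)t}=j\,m_k,$$ and furthermore $\mathbb P(D_t=k\mid D_0=j,\ D_t\geq1)\to a_k$ as $t\to\infty$.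
   Context: $D_t$ models the degree of a tracked vertex in the continuous-time partial duplication graph; $0$ is absorbing for $Q$. *)

theory Defs
  imports "HOL-Analysis.Analysis"
begin

definition Qgen :: "real \<Rightarrow> nat \<Rightarrow> nat \<Rightarrow> real" where
  "Qgen p j k =
     (if k = j + 1 then real j * p
      else if k < j then real (j choose k) * p ^ k * (1 - p) ^ (j - k)
      else if k = j then - (real j * p + 1 - p ^ j)
      else 0)"

text \<open>Generator Qbar on the state space {1,2,...} (only entries with j,k >= 1 are used).\<close>
definition Qbar :: "real \<Rightarrow> nat \<Rightarrow> nat \<Rightarrow> real" where
  "Qbar p j k =
     (if 1 \<le> k \<and> k < j then real ((j - 1) choose (k - 1)) * p ^ k * (1 - p) ^ (j - k)
      else if k = j + 1 then real (j + 1) * p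
      else if k = j then p ^ j - (2 + real j) * p
      else 0)"

text \<open>P is the (honest) transition function of a continuous-time Markov chain on the
  state space S with generator G: P t j k = Prob(X_t = k | X_0 = j).\<close>
definition ctmc_transition :: "nat set \<Rightarrow> (nat \<Rightarrow> nat \<Rightarrow> real) \<Rightarrow> (real \<Rightarrow> nat \<Rightarrow> nat \<Rightarrow> real) \<Rightarrow> bool" where
  "ctmc_transition S G P \<longleftrightarrow>
     (\<forall>t\<ge>0. \<forall>j\<in>S. \<forall>k\<in>S. P t j k \<ge> 0) \<and>
     (\<forall>t\<ge>0. \<forall>j\<in>S. ((\<lambda>k. P t j k) has_sum 1) S) \<and>
     (\<forall>j\<in>S. \<forall>k\<in>S. P 0 j k = (if j = k then 1 else 0)) \<and>
     (\<forall>s\<ge>0. \<forall>t\<ge>0. \<forall>j\<in>S. \<forall>k\<in>S. ((\<lambda>l. P s j l * P t l k) has_sum P (s + t) j k) S) \<and>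
     (\<forall>j\<in>S. \<forall>k\<in>S. ((\<lambda>t. P t j k) has_real_derivative G j k) (at 0 within {0..}))"

definition stationary_distribution :: "nat set \<Rightarrow> (real \<Rightarrow> nat \<Rightarrow> nat \<Rightarrow> real) \<Rightarrow> (nat \<Rightarrow> real) \<Rightarrow> bool" where
  "stationary_distribution S P u \<longleftrightarrow>
     (\<forall>k\<in>S. u k \<ge> 0) \<and> (u has_sum 1) S \<and>
     (\<forall>t\<ge>0. \<forall>k\<in>S. ((\<lambda>j. u j * P t j k) has_sum u k) S)"

end

theory Submission
  imports Defs "HOL-Library.Diagonal_Subsequence"
begin

text \<open>On the states \<open>l \<ge> 1\<close> the function \<open>h l = l\<close> is an eigenfunction of \<open>Q\<close> with eigenvalue
  \<open>2 p - 1\<close>, and \<open>Qbar\<close> is the corresponding Doob transform. Both \<open>P\<close> and the transformed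
  \<open>Pbar\<close> solve the backward equations of \<open>Q\<close>, whose solutions of linear growth in the initial
  state are unique (a maximum principle with the Lyapunov function \<open>i\<^sup>2 + 1\<close>); hence
  \<open>P t j k = j / k \<cdot> exp ((2 p - 1) t) \<cdot> Pbar t j k\<close>. For \<open>p = 1\<close> the chain \<open>Qbar\<close> is a pure birth process
  without stationary distribution, and for \<open>p < 1\<close> it is irreducible, so the transition
  matrices are \<open>L\<^sup>1\<close>-contractions that are strict on vectors of mass zero; together with
  tightness (domination by \<open>u / u j\<close>) this gives \<open>Pbar t j \<longrightarrow> u\<close> in \<open>L\<^sup>1\<close>, and both limits follow.\<close>

section \<open>Infinite sums of reals\<close>

lemma has_sum_diff:
  fixes f g :: "'a \<Rightarrow> 'b::topological_ab_group_add"
  assumes "(f has_sum a) A" "(g has_sum b) A"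
  shows "((\<lambda>x. f x - g x) has_sum (a - b)) A"
proof -
  have "((\<lambda>x. - g x) has_sum - b) A"
    using assms(2) by (simp add: has_sum_uminus)
  from has_sum_add[OF assms(1) this] show ?thesis
    by simp
qed

lemma summable_on_diff:
  fixes f g :: "'a \<Rightarrow> 'b::topological_ab_group_add"
  assumes "f summable_on A" "g summable_on A"
  shows "(\<lambda>x. f x - g x) summable_on A"
  using assms has_sum_diff unfolding summable_on_def by blast

lemma infsum_diff:
  fixes f g :: "'a \<Rightarrow> 'b::{topological_ab_group_add, t2_space}"
  assumes "f summable_on A" "g summable_on A"
  shows "infsum (\<lambda>x. f x - g x) A = infsum f A - infsum g A"
  by (intro infsumI has_sum_diff has_sum_infsum assms)

lemma has_sum_Diff_finite:
  fixes f :: "'a \<Rightarrow> real"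
  assumes "(f has_sum s) S" "finite F" "F \<subseteq> S"
  shows "(f has_sum (s - sum f F)) (S - F)"
proof -
  have "f summable_on (S - F)"
    using assms(1) summable_on_subset by (metis Diff_subset has_sum_imp_summable)
  then have rest: "(f has_sum infsum f (S - F)) (S - F)"
    by (simp add: has_sum_infsum)
  have "(f has_sum (sum f F + infsum f (S - F))) (F \<union> (S - F))"
    by (rule has_sum_Un_disjoint[OF has_sum_finite[OF assms(2)] rest]) auto
  moreover have "F \<union> (S - F) = S"
    using assms(3) by auto
  ultimately have "s = sum f F + infsum f (S - F)"
    using assms(1) has_sum_unique by metis
  with rest show ?thesis
    by simp
qed

lemma has_sum_nonneg_term_le:
  fixes f :: "'a \<Rightarrow> real"
  assumes "(f has_sum s) A" "x \<in> A" "\<And>y. y \<in> A \<Longrightarrow> 0 \<le> f y"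
  shows "f x \<le> s"
  using finite_sum_le_has_sum[OF assms(1), of "{x}"] assms by simp

lemma summable_on_abs_comparison:
  fixes f g :: "'a \<Rightarrow> real"
  assumes "g summable_on A" "\<And>x. x \<in> A \<Longrightarrow> \<bar>f x\<bar> \<le> g x"
  shows "f summable_on A"
proof (rule abs_summable_summable)
  show "(\<lambda>x. norm (f x)) summable_on A"
    using assms by (intro summable_on_comparison_test[OF assms(1)]) auto
qed

lemma summable_on_abs_real:
  fixes f :: "'a \<Rightarrow> real"
  assumes "f summable_on A"
  shows "(\<lambda>x. \<bar>f x\<bar>) summable_on A"
  using assms summable_on_iff_abs_summable_on_real[of f A] by simp

lemma abs_infsum_diff_le:
  fixes f g :: "'a \<Rightarrow> real"
  assumes "f summable_on A" "g summable_on A"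
  shows "\<bar>infsum f A - infsum g A\<bar> \<le> (\<Sum>\<^sub>\<infinity>x\<in>A. \<bar>f x - g x\<bar>)"
proof -
  have "(\<lambda>x. norm (f x - g x)) summable_on A"
    using summable_on_diff[OF assms] summable_on_iff_abs_summable_on_real[of "\<lambda>x. f x - g x" A]
    by simp
  then have "norm (infsum (\<lambda>x. f x - g x) A) \<le> (\<Sum>\<^sub>\<infinity>x\<in>A. norm (f x - g x))"
    by (rule norm_infsum_bound)
  then show ?thesis
    by (simp add: infsum_diff[OF assms])
qed

lemma abs_infsum_abs_diff_le:
  fixes f g :: "'a \<Rightarrow> real"
  assumes "f summable_on A" "g summable_on A"
  shows "\<bar>(\<Sum>\<^sub>\<infinity>x\<in>A. \<bar>f x\<bar>) - (\<Sum>\<^sub>\<infinity>x\<in>A. \<bar>g x\<bar>)\<bar> \<le> (\<Sum>\<^sub>\<infinity>x\<in>A. \<bar>f x - g x\<bar>)"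
proof -
  have abs: "(\<lambda>x. \<bar>f x\<bar>) summable_on A" "(\<lambda>x. \<bar>g x\<bar>) summable_on A"
    using assms by (simp_all add: summable_on_abs_real)
  have "\<bar>(\<Sum>\<^sub>\<infinity>x\<in>A. \<bar>f x\<bar>) - (\<Sum>\<^sub>\<infinity>x\<in>A. \<bar>g x\<bar>)\<bar> \<le> (\<Sum>\<^sub>\<infinity>x\<in>A. \<bar>\<bar>f x\<bar> - \<bar>g x\<bar>\<bar>)"
    by (rule abs_infsum_diff_le[OF abs])
  also have "\<dots> \<le> (\<Sum>\<^sub>\<infinity>x\<in>A. \<bar>f x - g x\<bar>)"
    by (intro infsum_mono summable_on_abs_real summable_on_diff abs assms) auto
  finally show ?thesis .
qed

lemma infsum_abs_tendsto_0_dominated: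
  fixes x :: "nat \<Rightarrow> 'a \<Rightarrow> real" and g :: "'a \<Rightarrow> real"
  assumes g: "g summable_on S" and dom: "\<And>n k. k \<in> S \<Longrightarrow> \<bar>x n k\<bar> \<le> g k"
    and lim: "\<And>k. k \<in> S \<Longrightarrow> (\<lambda>n. x n k) \<longlonglongrightarrow> 0"
  shows "(\<lambda>n. \<Sum>\<^sub>\<infinity>k\<in>S. \<bar>x n k\<bar>) \<longlonglongrightarrow> 0"
proof (rule LIMSEQ_I)
  fix r :: real assume r: "0 < r"
  obtain K where K: "finite K" "K \<subseteq> S" "dist (sum g K) (infsum g S) \<le> r / 2"
    using infsum_finite_approximation[OF g, of "r / 2"] r by auto
  have tail: "(g has_sum (infsum g S - sum g K)) (S - K)"
    by (rule has_sum_Diff_finite[OF has_sum_infsum[OF g] K(1,2)])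
  have split: "(\<Sum>\<^sub>\<infinity>k\<in>S. \<bar>x n k\<bar>) \<le> (\<Sum>k\<in>K. \<bar>x n k\<bar>) + r / 2" for n
  proof -
    have "(\<lambda>k. \<bar>x n k\<bar>) summable_on S"
      by (rule summable_on_comparison_test[OF g]) (use dom in auto)
    then have "((\<lambda>k. \<bar>x n k\<bar>) has_sum ((\<Sum>\<^sub>\<infinity>k\<in>S. \<bar>x n k\<bar>) - (\<Sum>k\<in>K. \<bar>x n k\<bar>))) (S - K)"
      by (rule has_sum_Diff_finite[OF has_sum_infsum K(1,2)])
    then have "(\<Sum>\<^sub>\<infinity>k\<in>S. \<bar>x n k\<bar>) - (\<Sum>k\<in>K. \<bar>x n k\<bar>) \<le> infsum g S - sum g K"
      by (rule has_sum_mono[OF _ tail]) (use dom in auto)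
    then show ?thesis
      using K(3) unfolding dist_real_def by linarith
  qed
  have "(\<lambda>n. \<Sum>k\<in>K. \<bar>x n k\<bar>) \<longlonglongrightarrow> (\<Sum>k\<in>K. \<bar>0\<bar>)"
    by (intro tendsto_sum tendsto_rabs lim) (use K in auto)
  then obtain N where N: "\<And>n. n \<ge> N \<Longrightarrow> (\<Sum>k\<in>K. \<bar>x n k\<bar>) < r / 2"
    using LIMSEQ_D[of _ 0 "r / 2"] r by fastforce
  have "\<bar>\<Sum>\<^sub>\<infinity>k\<in>S. \<bar>x n k\<bar>\<bar> < r" if "n \<ge> N" for n
    using split[of n] N[OF that] infsum_nonneg[of S "\<lambda>k. \<bar>x n k\<bar>"] by auto
  then show "\<exists>N. \<forall>n\<ge>N. norm ((\<Sum>\<^sub>\<infinity>k\<in>S. \<bar>x n k\<bar>) - 0) < r"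
    by auto
qed

lemma bounded_double_seq_pointwise_convergent_subseq:
  fixes f :: "nat \<Rightarrow> nat \<Rightarrow> real"
  assumes bounded: "\<And>n k. \<bar>f n k\<bar> \<le> B"
  obtains s :: "nat \<Rightarrow> nat" where "strict_mono s" "\<And>k. convergent (\<lambda>n. f (s n) k)"
proof -
  let ?P = "\<lambda>k s. convergent (\<lambda>n. f (s n) k)"
  interpret subseqs ?P
  proof (unfold subseqs_def, intro allI impI)
    fix k :: nat and s :: "nat \<Rightarrow> nat" assume "strict_mono s"
    have "(\<lambda>n. f (s n) k) n \<in> {-B..B}" for n
      using bounded[of "s n" k] by (simp add: abs_le_iff)
    then obtain l r where "strict_mono r" "((\<lambda>n. f (s n) k) \<circ> r) \<longlonglongrightarrow> l"
      using compact_Icc compact_imp_seq_compact seq_compactE by metis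
    then show "\<exists>r. strict_mono r \<and> ?P k (s \<circ> r)"
      by (auto simp: comp_def convergent_def)
  qed
  have "?P k diagseq" for k
  proof -
    have "convergent ((\<lambda>n. f (seqseq (Suc k) n) k) \<circ> (\<lambda>n. fold_reduce (Suc k) n (Suc k + n)))"
      by (intro convergent_subseq_convergent seqseq_holds subseq_diagonal_rest)
    then have "?P k (diagseq \<circ> (+) (Suc k))"
      unfolding diagseq_seqseq by (simp only: comp_def)
    then obtain L where "(\<lambda>n. f (diagseq (n + Suc k)) k) \<longlonglongrightarrow> L"
      by (auto simp: comp_def add.commute convergent_def)
    then show ?thesis
      using LIMSEQ_offset convergent_def by blast
  qed
  with that subseq_diagseq show ?thesis by blast
qed

lemma infsum_zero_sign_change:
  fixes w :: "'a \<Rightarrow> real"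
  assumes "w summable_on S" "infsum w S = 0" "l\<^sub>0 \<in> S" "w l\<^sub>0 \<noteq> 0" and \<sigma>: "\<sigma> \<in> {-1, 1}"
  shows "\<exists>l\<in>S. 0 < \<sigma> * w l"
proof (rule ccontr)
  assume "\<not> (\<exists>l\<in>S. 0 < \<sigma> * w l)"
  then have nonpos: "\<And>l. l \<in> S \<Longrightarrow> 0 \<le> - \<sigma> * w l"
    by (simp add: not_less)
  have "infsum (\<lambda>l. - \<sigma> * w l) S \<le> 0"
    unfolding infsum_cmult_right' using assms(2) by simp
  then have "- \<sigma> * w l\<^sub>0 = 0"
    by (rule nonneg_infsum_le_0D[OF _ summable_on_cmult_right[OF assms(1)] nonpos assms(3)])
  then show False
    using \<sigma> assms(4) by auto
qed

lemma infsum_div_pos: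
  fixes u :: "nat \<Rightarrow> real"
  assumes u: "(u has_sum 1) {1..}" "\<And>i. i \<in> {1..} \<Longrightarrow> 0 \<le> u i"
  shows "0 < (\<Sum>\<^sub>\<infinity>i\<in>{1..}. u i / real i)"
proof -
  have summable: "(\<lambda>i. u i / real i) summable_on {1..}"
  proof (rule summable_on_comparison_test)
    show "u summable_on {1..}"
      using u(1) by (rule has_sum_imp_summable)
    fix i :: nat assume "i \<in> {1..}"
    then show "0 \<le> u i / real i" "u i / real i \<le> u i"
      using u(2)[of i] by (simp_all add: divide_le_eq mult_le_cancel_left1)
  qed
  obtain i where i: "i \<in> {1..}" "u i \<noteq> 0"
    using u(1) has_sum_0[of "{1..}" u] has_sum_unique by force
  then have "0 < u i / real i"
    using u(2) by (simp add: order.strict_iff_order)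
  also have "\<dots> \<le> (\<Sum>\<^sub>\<infinity>i\<in>{1..}. u i / real i)"
    using finite_sum_le_infsum[OF summable, of "{i}"] i u(2) by simp
  finally show ?thesis .
qed

lemma antimono_tendsto_0_at_top:
  fixes d :: "real \<Rightarrow> real"
  assumes antimono: "\<And>s t. 0 \<le> s \<Longrightarrow> s \<le> t \<Longrightarrow> d t \<le> d s" and nonneg: "\<And>t. 0 \<le> d t"
    and sequentially: "(\<lambda>n. d (real n)) \<longlonglongrightarrow> 0"
  shows "(d \<longlongrightarrow> 0) at_top"
proof (rule tendsto_sandwich[OF _ _ tendsto_const])
  show "eventually (\<lambda>t. 0 \<le> d t) at_top"
    by (simp add: nonneg)
  show "eventually (\<lambda>t. d t \<le> d (real (nat \<lfloor>t\<rfloor>))) at_top"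
    using eventually_ge_at_top[of "0::real"] by eventually_elim (auto intro!: antimono)
  show "((\<lambda>t. d (real (nat \<lfloor>t\<rfloor>))) \<longlongrightarrow> 0) at_top"
    using filterlim_compose[OF sequentially
        filterlim_compose[OF filterlim_nat_sequentially filterlim_floor_sequentially]]
    by (simp add: o_def)
qed

section \<open>Stochastic matrices\<close>

locale stochastic_matrix =
  fixes S :: "'a set" and M :: "'a \<Rightarrow> 'a \<Rightarrow> real"
  assumes nonneg: "l \<in> S \<Longrightarrow> k \<in> S \<Longrightarrow> 0 \<le> M l k"
    and row_has_sum: "l \<in> S \<Longrightarrow> (M l has_sum 1) S"
begin

lemma abs_summable_on_product:
  assumes "w summable_on S"
  shows "(\<lambda>(k, l). \<bar>w l\<bar> * M l k) summable_on (S \<times> S)"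
proof -
  have "(\<lambda>(l, k). \<bar>w l\<bar> * M l k) summable_on (S \<times> S)"
  proof (rule summable_on_SigmaI[where g = "\<lambda>l. \<bar>w l\<bar>"])
    show "((\<lambda>k. case (l, k) of (l, k) \<Rightarrow> \<bar>w l\<bar> * M l k) has_sum \<bar>w l\<bar>) S" if "l \<in> S" for l
      using has_sum_cmult_right[OF row_has_sum[OF that], of "\<bar>w l\<bar>"] by simp
  qed (use summable_on_abs_real[OF assms] nonneg in auto)
  then show ?thesis
    using summable_on_swap[of "\<lambda>(l, k). \<bar>w l\<bar> * M l k" S S] by simp
qed

lemma summable_on_product:
  assumes "w summable_on S"
  shows "(\<lambda>(k, l). w l * M l k) summable_on (S \<times> S)"
proof (rule abs_summable_summable)
  show "(\<lambda>x. norm (case x of (k, l) \<Rightarrow> w l * M l k)) summable_on (S \<times> S)"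
    by (rule summable_on_cong[THEN iffD1, OF _ abs_summable_on_product[OF assms]])
       (auto simp: abs_mult nonneg)
qed

lemma summable_on_column:
  assumes "w summable_on S" "k \<in> S"
  shows "(\<lambda>l. w l * M l k) summable_on S"
  using summable_on_SigmaD1[of "\<lambda>k l. w l * M l k" S "\<lambda>_. S" k] summable_on_product assms
  by simp

lemma summable_on_vecmat:
  assumes "w summable_on S"
  shows "(\<lambda>k. \<Sum>\<^sub>\<infinity>l\<in>S. w l * M l k) summable_on S"
  using summable_on_Sigma_banach[of "\<lambda>k l. w l * M l k" S "\<lambda>_. S"] summable_on_product[OF assms]
  by simp

lemma infsum_vecmat:
  assumes "w summable_on S"
  shows "(\<Sum>\<^sub>\<infinity>k\<in>S. \<Sum>\<^sub>\<infinity>l\<in>S. w l * M l k) = (\<Sum>\<^sub>\<infinity>l\<in>S. w l)"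
proof -
  have "(\<Sum>\<^sub>\<infinity>k\<in>S. \<Sum>\<^sub>\<infinity>l\<in>S. w l * M l k) = (\<Sum>\<^sub>\<infinity>l\<in>S. \<Sum>\<^sub>\<infinity>k\<in>S. w l * M l k)"
    using infsum_swap_banach[of "\<lambda>k l. w l * M l k" S S] summable_on_product[OF assms] by simp
  also have "\<dots> = (\<Sum>\<^sub>\<infinity>l\<in>S. w l)"
    by (rule infsum_cong) (use infsumI[OF has_sum_cmult_right[OF row_has_sum]] in simp)
  finally show ?thesis .
qed

lemma abs_vecmat_le:
  assumes "w summable_on S" "k \<in> S"
  shows "\<bar>\<Sum>\<^sub>\<infinity>l\<in>S. w l * M l k\<bar> \<le> (\<Sum>\<^sub>\<infinity>l\<in>S. \<bar>w l\<bar> * M l k)"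
proof -
  have "norm (\<Sum>\<^sub>\<infinity>l\<in>S. w l * M l k) \<le> (\<Sum>\<^sub>\<infinity>l\<in>S. norm (w l * M l k))"
    using summable_on_abs_real[OF summable_on_column[OF assms]] by (intro norm_infsum_bound) simp
  also have "\<dots> = (\<Sum>\<^sub>\<infinity>l\<in>S. \<bar>w l\<bar> * M l k)"
    by (rule infsum_cong) (use nonneg assms(2) in \<open>auto simp: abs_mult\<close>)
  finally show ?thesis
    by simp
qed

lemma L1_contraction:
  assumes "w summable_on S"
  shows "(\<Sum>\<^sub>\<infinity>k\<in>S. \<bar>\<Sum>\<^sub>\<infinity>l\<in>S. w l * M l k\<bar>) \<le> (\<Sum>\<^sub>\<infinity>l\<in>S. \<bar>w l\<bar>)"
proof -
  have abs_w: "(\<lambda>l. \<bar>w l\<bar>) summable_on S"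
    by (rule summable_on_abs_real[OF assms])
  have "(\<Sum>\<^sub>\<infinity>k\<in>S. \<bar>\<Sum>\<^sub>\<infinity>l\<in>S. w l * M l k\<bar>) \<le> (\<Sum>\<^sub>\<infinity>k\<in>S. \<Sum>\<^sub>\<infinity>l\<in>S. \<bar>w l\<bar> * M l k)"
    using abs_vecmat_le[OF assms] summable_on_vecmat[OF abs_w]
    by (intro infsum_mono summable_on_abs_real summable_on_vecmat assms)
  also have "\<dots> = (\<Sum>\<^sub>\<infinity>l\<in>S. \<bar>w l\<bar>)"
    by (rule infsum_vecmat[OF abs_w])
  finally show ?thesis .
qed

lemma abs_vecmat_less:
  assumes w: "w summable_on S" "\<And>\<sigma>. \<sigma> \<in> {-1, 1} \<Longrightarrow> \<exists>l\<in>S. 0 < \<sigma> * w l"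
    and column_pos: "k\<^sub>0 \<in> S" "\<And>l. l \<in> S \<Longrightarrow> 0 < M l k\<^sub>0"
  shows "\<bar>\<Sum>\<^sub>\<infinity>l\<in>S. w l * M l k\<^sub>0\<bar> < (\<Sum>\<^sub>\<infinity>l\<in>S. \<bar>w l\<bar> * M l k\<^sub>0)"
proof -
  have "\<sigma> * (\<Sum>\<^sub>\<infinity>l\<in>S. w l * M l k\<^sub>0) < (\<Sum>\<^sub>\<infinity>l\<in>S. \<bar>w l\<bar> * M l k\<^sub>0)" if \<sigma>: "\<sigma> \<in> {-1, 1}" for \<sigma> :: real
  proof -
    obtain l where l: "l \<in> S" "0 < - \<sigma> * w l"
      using w(2)[of "- \<sigma>"] \<sigma> by auto
    have "((\<lambda>l. \<sigma> * (w l * M l k\<^sub>0)) has_sum \<sigma> * (\<Sum>\<^sub>\<infinity>l\<in>S. w l * M l k\<^sub>0)) S"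
      by (intro has_sum_cmult_right has_sum_infsum summable_on_column w(1) column_pos(1))
    moreover have "((\<lambda>l. \<bar>w l\<bar> * M l k\<^sub>0) has_sum (\<Sum>\<^sub>\<infinity>l\<in>S. \<bar>w l\<bar> * M l k\<^sub>0)) S"
      by (intro has_sum_infsum summable_on_column summable_on_abs_real w(1) column_pos(1))
    moreover have "\<sigma> * w l * M l k\<^sub>0 < \<bar>w l\<bar> * M l k\<^sub>0"
      using l(2) column_pos(2)[OF l(1)] by (intro mult_strict_right_mono) auto
    moreover have "\<sigma> * w l' * M l' k\<^sub>0 \<le> \<bar>w l'\<bar> * M l' k\<^sub>0" if "l' \<in> S" for l'
    proof (rule mult_right_mono)
      show "\<sigma> * w l' \<le> \<bar>w l'\<bar>"
        using \<sigma> by auto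
    qed (use column_pos(2)[OF that] in simp)
    ultimately show ?thesis
      using has_sum_strict_mono[where f = "\<lambda>l. \<sigma> * (w l * M l k\<^sub>0)" and x = l] l(1)
      by (simp add: mult.assoc)
  qed
  from this[of 1] this[of "-1"] show ?thesis
    by (simp add: abs_less_iff)
qed

lemma L1_strict_contraction:
  assumes w: "w summable_on S" "infsum w S = 0" "l\<^sub>0 \<in> S" "w l\<^sub>0 \<noteq> 0"
    and column_pos: "k\<^sub>0 \<in> S" "\<And>l. l \<in> S \<Longrightarrow> 0 < M l k\<^sub>0"
  shows "(\<Sum>\<^sub>\<infinity>k\<in>S. \<bar>\<Sum>\<^sub>\<infinity>l\<in>S. w l * M l k\<bar>) < (\<Sum>\<^sub>\<infinity>l\<in>S. \<bar>w l\<bar>)"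
proof -
  have abs_w: "(\<lambda>l. \<bar>w l\<bar>) summable_on S"
    by (rule summable_on_abs_real[OF w(1)])
  have "(\<Sum>\<^sub>\<infinity>k\<in>S. \<bar>\<Sum>\<^sub>\<infinity>l\<in>S. w l * M l k\<bar>) < (\<Sum>\<^sub>\<infinity>k\<in>S. \<Sum>\<^sub>\<infinity>l\<in>S. \<bar>w l\<bar> * M l k)"
  proof (rule has_sum_strict_mono[OF has_sum_infsum has_sum_infsum])
    show "(\<lambda>k. \<bar>\<Sum>\<^sub>\<infinity>l\<in>S. w l * M l k\<bar>) summable_on S"
      by (intro summable_on_abs_real summable_on_vecmat w(1))
    show "(\<lambda>k. \<Sum>\<^sub>\<infinity>l\<in>S. \<bar>w l\<bar> * M l k) summable_on S"
      by (rule summable_on_vecmat[OF abs_w])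
    show "\<bar>\<Sum>\<^sub>\<infinity>l\<in>S. w l * M l k\<^sub>0\<bar> < (\<Sum>\<^sub>\<infinity>l\<in>S. \<bar>w l\<bar> * M l k\<^sub>0)"
      using infsum_zero_sign_change[OF w] by (intro abs_vecmat_less w(1) column_pos) auto
  qed (use abs_vecmat_le[OF w(1)] column_pos(1) in auto)
  also have "\<dots> = (\<Sum>\<^sub>\<infinity>l\<in>S. \<bar>w l\<bar>)"
    by (rule infsum_vecmat[OF abs_w])
  finally show ?thesis .
qed

end

section \<open>Transition functions of continuous-time chains\<close>

locale ctmc =
  fixes S :: "nat set" and G :: "nat \<Rightarrow> nat \<Rightarrow> real" and P :: "real \<Rightarrow> nat \<Rightarrow> nat \<Rightarrow> real"
  assumes transition: "ctmc_transition S G P"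
begin

lemma nonneg: "0 \<le> t \<Longrightarrow> i \<in> S \<Longrightarrow> k \<in> S \<Longrightarrow> 0 \<le> P t i k"
  using transition unfolding ctmc_transition_def by blast

lemma row_has_sum: "0 \<le> t \<Longrightarrow> i \<in> S \<Longrightarrow> ((\<lambda>k. P t i k) has_sum 1) S"
  using transition unfolding ctmc_transition_def by blast

lemma initial: "i \<in> S \<Longrightarrow> k \<in> S \<Longrightarrow> P 0 i k = (if i = k then 1 else 0)"
  using transition unfolding ctmc_transition_def by blast

lemma chapman_kolmogorov:
  "0 \<le> s \<Longrightarrow> 0 \<le> t \<Longrightarrow> i \<in> S \<Longrightarrow> k \<in> S \<Longrightarrow> ((\<lambda>l. P s i l * P t l k) has_sum P (s + t) i k) S"
  using transition unfolding ctmc_transition_def by blast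

lemma has_derivative_at_0:
  "i \<in> S \<Longrightarrow> k \<in> S \<Longrightarrow> ((\<lambda>t. P t i k) has_real_derivative G i k) (at 0 within {0..})"
  using transition unfolding ctmc_transition_def by blast

lemma stochastic_matrix: "0 \<le> t \<Longrightarrow> stochastic_matrix S (P t)"
  by unfold_locales (use nonneg row_has_sum in auto)

lemma le_1: "0 \<le> t \<Longrightarrow> i \<in> S \<Longrightarrow> k \<in> S \<Longrightarrow> P t i k \<le> 1"
  using has_sum_nonneg_term_le[OF row_has_sum] nonneg by blast

lemma chapman_kolmogorov_ge:
  assumes "0 \<le> s" "0 \<le> t" "i \<in> S" "l \<in> S" "k \<in> S"
  shows "P s i l * P t l k \<le> P (s + t) i k"
  using has_sum_nonneg_term_le[OF chapman_kolmogorov[of s t i k] assms(4)] assms nonneg by auto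

lemma chapman_kolmogorov_split:
  assumes "0 \<le> s" "0 \<le> t" "i \<in> S" "k \<in> S" "finite F" "F \<subseteq> S"
  obtains E where "P (s + t) i k = (\<Sum>l\<in>F. P s i l * P t l k) + E" "0 \<le> E"
    "E \<le> 1 - (\<Sum>l\<in>F. P s i l)"
proof
  let ?f = "\<lambda>l. P s i l * P t l k"
  have rest: "(?f has_sum (P (s + t) i k - sum ?f F)) (S - F)"
    by (rule has_sum_Diff_finite[OF chapman_kolmogorov assms(5,6)]) (use assms in auto)
  have mass: "((\<lambda>l. P s i l) has_sum (1 - (\<Sum>l\<in>F. P s i l))) (S - F)"
    by (rule has_sum_Diff_finite[OF row_has_sum assms(5,6)]) (use assms in auto)
  show "0 \<le> P (s + t) i k - sum ?f F"
    by (rule has_sum_nonneg[OF rest]) (use assms nonneg in auto)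
  show "P (s + t) i k - sum ?f F \<le> 1 - (\<Sum>l\<in>F. P s i l)"
    by (rule has_sum_mono[OF rest mass]) (use assms nonneg le_1 in \<open>auto intro!: mult_left_le\<close>)
qed simp

lemma abs_diff_le:
  assumes "0 \<le> h" "0 \<le> t" "i \<in> S" "k \<in> S"
  shows "\<bar>P (h + t) i k - P t i k\<bar> \<le> 1 - P h i i"
proof -
  obtain E where E: "P (h + t) i k = P h i i * P t i k + E" "0 \<le> E" "E \<le> 1 - P h i i"
    using chapman_kolmogorov_split[OF assms, of "{i}"] assms by auto
  have "0 \<le> P t i k" "P t i k \<le> 1" "P h i i \<le> 1"
    using assms nonneg le_1 by auto
  then have "0 \<le> (1 - P h i i) * P t i k" "(1 - P h i i) * P t i k \<le> 1 - P h i i"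
    by (auto intro: mult_left_le)
  then show ?thesis
    using E by (auto simp: algebra_simps)
qed

lemma continuous_on:
  assumes "i \<in> S" "k \<in> S"
  shows "continuous_on {0..} (\<lambda>t. P t i k)"
proof (unfold continuous_on_iff, intro ballI allI impI)
  fix t e :: real assume t: "t \<in> {0..}" and e: "0 < e"
  have "continuous (at 0 within {0..}) (\<lambda>t. P t i i)"
    using has_derivative_at_0[OF assms(1,1)] DERIV_continuous by blast
  then obtain d where d: "d > 0" "\<And>h. h \<in> {0..} \<Longrightarrow> \<bar>h\<bar> < d \<Longrightarrow> \<bar>P h i i - 1\<bar> < e"
    using e initial[OF assms(1,1)] unfolding continuous_within_eps_delta dist_real_def by force
  have "\<bar>P t' i k - P t i k\<bar> < e" if "t' \<in> {0..}" "\<bar>t' - t\<bar> < d" for t'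
  proof -
    have "\<bar>P (\<bar>t' - t\<bar> + min t t') i k - P (min t t') i k\<bar> \<le> 1 - P \<bar>t' - t\<bar> i i"
      using t that assms by (intro abs_diff_le) auto
    moreover have "\<bar>P \<bar>t' - t\<bar> i i - 1\<bar> < e"
      using d(2) that by simp
    ultimately show ?thesis
      by (cases "t \<le> t'") (auto simp: abs_minus_commute)
  qed
  then show "\<exists>d>0. \<forall>t'\<in>{0..}. dist t' t < d \<longrightarrow> dist (P t' i k) (P t i k) < e"
    using d(1) unfolding dist_real_def by blast
qed

lemma backward_difference_quotient:
  assumes F: "finite F" "F \<subseteq> S" "i \<in> F" and k: "k \<in> S" and y: "0 \<le> y" "y < t"
  obtains E where
    "(P y i k - P t i k) / (y - t) = (\<Sum>l\<in>F. (P (t - y) i l - P 0 i l) / (t - y) * P y l k) + E"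
    "0 \<le> E" "E \<le> - (\<Sum>l\<in>F. (P (t - y) i l - P 0 i l) / (t - y))"
proof -
  have i: "i \<in> S"
    using F by auto
  obtain E where E: "P (t - y + y) i k = (\<Sum>l\<in>F. P (t - y) i l * P y l k) + E" "0 \<le> E"
    "E \<le> 1 - (\<Sum>l\<in>F. P (t - y) i l)"
    using chapman_kolmogorov_split[OF _ y(1) i k F(1,2), of "t - y"] y by auto
  have "(\<Sum>l\<in>F. P 0 i l * f l) = f i" for f :: "nat \<Rightarrow> real"
  proof -
    have "(\<Sum>l\<in>F. P 0 i l * f l) = (\<Sum>l\<in>F. if l = i then f l else 0)"
      by (rule sum.cong) (use F initial[OF i] in auto)
    then show ?thesis
      using F by simp
  qed
  from this[of "\<lambda>l. P y l k"] this[of "\<lambda>_. 1"]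
  have diff: "P t i k - P y i k = (\<Sum>l\<in>F. (P (t - y) i l - P 0 i l) * P y l k) + E"
    and mass: "1 - (\<Sum>l\<in>F. P (t - y) i l) = - (\<Sum>l\<in>F. P (t - y) i l - P 0 i l)"
    using E(1) by (simp_all add: left_diff_distrib sum_subtractf)
  have pos: "0 < t - y"
    using y by simp
  show ?thesis
  proof
    have "(P y i k - P t i k) / (y - t) = (P t i k - P y i k) / (t - y)"
      by (metis minus_diff_eq minus_divide_divide)
    also have "\<dots> = (\<Sum>l\<in>F. (P (t - y) i l - P 0 i l) / (t - y) * P y l k) + E / (t - y)"
      unfolding diff add_divide_distrib sum_divide_distrib by simp
    finally show "(P y i k - P t i k) / (y - t) = \<dots>" .
    show "0 \<le> E / (t - y)"
      using E(2) pos by simp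
    have "E / (t - y) \<le> (1 - (\<Sum>l\<in>F. P (t - y) i l)) / (t - y)"
      using E(3) pos by (rule divide_right_mono[OF _ less_imp_le])
    then show "E / (t - y) \<le> - (\<Sum>l\<in>F. (P (t - y) i l - P 0 i l) / (t - y))"
      unfolding mass by (simp add: sum_divide_distrib)
  qed
qed

lemma backward_equation:
  assumes F: "finite F" "F \<subseteq> S" "i \<in> F" and k: "k \<in> S"
    and row_sum: "(\<Sum>l\<in>F. G i l) = 0" and t: "0 < t"
  shows "((\<lambda>s. P s i k) has_real_derivative (\<Sum>l\<in>F. G i l * P t l k)) (at t within {0..t})"
proof -
  define A where "A l y = (P (t - y) i l - P 0 i l) / (t - y)" for l y
  have before_t: "eventually (\<lambda>y. y \<in> {0..<t}) (at t within {0..t})"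
    by (auto simp: eventually_at_filter)
  have to_0: "filterlim (\<lambda>y. t - y) (at 0 within {0..}) (at t within {0..t})"
    unfolding filterlim_at
    using before_t by (auto elim: eventually_mono intro!: tendsto_eq_intros)
  have A: "(A l \<longlongrightarrow> G i l) (at t within {0..t})" if "l \<in> F" for l
  proof -
    have "i \<in> S" "l \<in> S"
      using F that by auto
    then have "((\<lambda>h. (P h i l - P 0 i l) / h) \<longlongrightarrow> G i l) (at 0 within {0..})"
      using has_derivative_at_0[of i l] unfolding has_field_derivative_iff by simp
    from filterlim_compose[OF this to_0] show ?thesis
      unfolding A_def o_def .
  qed
  have "((\<lambda>y. P y l k) \<longlongrightarrow> P t l k) (at t within {0..t})" if "l \<in> F" for l
  proof (rule tendsto_within_subset)
    show "((\<lambda>y. P y l k) \<longlongrightarrow> P t l k) (at t within {0..})"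
      using continuous_on[of l k] that F k t by (auto simp: continuous_on_def)
  qed auto
  then have main: "((\<lambda>y. \<Sum>l\<in>F. A l y * P y l k) \<longlongrightarrow> (\<Sum>l\<in>F. G i l * P t l k)) (at t within {0..t})"
    by (intro tendsto_sum tendsto_mult A)
  have upper: "((\<lambda>y. - (\<Sum>l\<in>F. A l y)) \<longlongrightarrow> 0) (at t within {0..t})"
    using tendsto_minus[OF tendsto_sum[of F A "G i", OF A]] row_sum by simp
  have bounds: "0 \<le> (P y i k - P t i k) / (y - t) - (\<Sum>l\<in>F. A l y * P y l k) \<and>
      (P y i k - P t i k) / (y - t) - (\<Sum>l\<in>F. A l y * P y l k) \<le> - (\<Sum>l\<in>F. A l y)"
    if y: "y \<in> {0..<t}" for y
  proof -
    obtain E where "(P y i k - P t i k) / (y - t) = (\<Sum>l\<in>F. A l y * P y l k) + E"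
      "0 \<le> E" "E \<le> - (\<Sum>l\<in>F. A l y)"
      using backward_difference_quotient[OF F k, of y t, folded A_def] y by auto
    then show ?thesis
      by simp
  qed
  have remainder: "((\<lambda>y. (P y i k - P t i k) / (y - t) - (\<Sum>l\<in>F. A l y * P y l k)) \<longlongrightarrow> 0)
      (at t within {0..t})"
    by (rule tendsto_sandwich[OF _ _ tendsto_const upper])
       (use before_t bounds in \<open>auto elim: eventually_mono\<close>)
  have "((\<lambda>y. (P y i k - P t i k) / (y - t)) \<longlongrightarrow> (\<Sum>l\<in>F. G i l * P t l k)) (at t within {0..t})"
    using tendsto_add[OF main remainder] by simp
  then show ?thesis
    unfolding has_field_derivative_iff .
qed

end

context ctmc
begin

lemma diagonal_pos:
  assumes i: "i \<in> S" and t: "0 \<le> t"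
  shows "0 < P t i i"
proof -
  have "continuous (at 0 within {0..}) (\<lambda>t. P t i i)"
    using has_derivative_at_0[OF i i] DERIV_continuous by blast
  then obtain d where d: "d > 0" "\<forall>h\<in>{0..}. dist h 0 < d \<longrightarrow> dist (P h i i) (P 0 i i) < 1"
    unfolding continuous_within_eps_delta using zero_less_one by blast
  have power_le: "P h i i ^ n \<le> P (real n * h) i i" if h: "0 \<le> h" for n h
  proof (induction n)
    case (Suc n)
    have "P h i i ^ Suc n \<le> P (real n * h) i i * P h i i"
      unfolding power_Suc2 by (rule mult_right_mono[OF Suc nonneg[OF h i i]])
    also have "\<dots> \<le> P (real n * h + h) i i"
      using h i by (intro chapman_kolmogorov_ge) auto
    finally show ?case
      by (simp add: algebra_simps)
  qed (simp add: initial[OF i i])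
  obtain n :: nat where n: "t / d < real n"
    using reals_Archimedean2 by blast
  then have "t < real n * d"
    using d(1) by (simp add: field_simps)
  moreover from this have "0 < n"
    using t by (cases n) auto
  ultimately have "0 < n" "t / real n < d"
    by (simp_all add: divide_less_eq mult.commute)
  then have "0 < P (t / real n) i i ^ n"
    using d(2) t initial[OF i i] by (auto simp: dist_real_def)
  also have "\<dots> \<le> P (real n * (t / real n)) i i"
    by (rule power_le) (use t in simp)
  also have "real n * (t / real n) = t"
    using \<open>0 < n\<close> by simp
  finally show ?thesis .
qed

lemma pos_of_rate_pos:
  assumes "i \<in> S" "k \<in> S" "i \<noteq> k" "0 < G i k" "0 < t"
  shows "0 < P t i k"
proof -
  obtain d where d: "d > 0" "\<And>h. 0 < h \<Longrightarrow> h < d \<Longrightarrow> P 0 i k < P h i k"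
    using has_real_derivative_pos_inc_right[OF has_derivative_at_0 \<open>0 < G i k\<close>] assms(1,2) by force
  define h where "h = min d t / 2"
  have h: "0 < h" "h < d" "h < t"
    unfolding h_def using d(1) assms(5) by auto
  have "0 < P h i k * P (t - h) k k"
    using d(2)[OF h(1,2)] initial assms diagonal_pos[of k "t - h"] h by simp
  also have "\<dots> \<le> P (h + (t - h)) i k"
    using h assms by (intro chapman_kolmogorov_ge) auto
  finally show ?thesis
    by simp
qed

lemma pos_trans:
  assumes "i \<in> S" "l \<in> S" "k \<in> S" "\<And>t. 0 < t \<Longrightarrow> 0 < P t i l" "\<And>t. 0 < t \<Longrightarrow> 0 < P t l k"
    and "0 < t"
  shows "0 < P t i k"
proof -
  have "0 < P (t / 2) i l * P (t / 2) l k"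
    using assms by simp
  also have "\<dots> \<le> P (t / 2 + t / 2) i k"
    using assms by (intro chapman_kolmogorov_ge) auto
  finally show ?thesis
    by simp
qed

end

locale irreducible_ctmc = ctmc +
  assumes transition_pos: "0 < t \<Longrightarrow> i \<in> S \<Longrightarrow> k \<in> S \<Longrightarrow> 0 < P t i k"

section \<open>Uniqueness for the backward equations\<close>

lemma linear_less_quadratic:
  fixes B \<epsilon> :: real
  assumes \<epsilon>: "0 < \<epsilon>" and l: "nat \<lceil>2 * \<bar>B\<bar> / \<epsilon>\<rceil> < l"
  shows "\<bar>B\<bar> * (real l + 1) < \<epsilon> * (real l ^ 2 + 1)"
proof -
  have "2 * \<bar>B\<bar> / \<epsilon> \<le> real (nat \<lceil>2 * \<bar>B\<bar> / \<epsilon>\<rceil>)"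
    by (rule real_nat_ceiling_ge)
  also have "\<dots> < real l"
    using l by simp
  finally have "2 * \<bar>B\<bar> < \<epsilon> * real l"
    using \<epsilon> by (simp add: field_simps)
  have "1 \<le> real l"
    using l by simp
  then have "\<bar>B\<bar> * (real l + 1) \<le> (2 * \<bar>B\<bar>) * real l"
    using mult_left_mono[of "real l + 1" "2 * real l" "\<bar>B\<bar>"] by simp
  also have "\<dots> < (\<epsilon> * real l) * real l"
    using \<open>2 * \<bar>B\<bar> < \<epsilon> * real l\<close> \<open>1 \<le> real l\<close> by (intro mult_strict_right_mono) auto
  also have "\<dots> < \<epsilon> * (real l ^ 2 + 1)"
    using \<epsilon> by (simp add: power2_eq_square)
  finally show ?thesis .
qed

lemma first_nonneg_time:
  fixes z :: "nat \<Rightarrow> real \<Rightarrow> real"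
  assumes I: "finite I" and cont: "\<And>i. i \<in> I \<Longrightarrow> continuous_on {0..T} (z i)"
    and initial: "\<And>i. i \<in> I \<Longrightarrow> z i 0 < 0"
    and it: "i \<in> I" "0 \<le> t" "t \<le> T" "0 \<le> z i t"
  shows "\<exists>\<tau> j. 0 < \<tau> \<and> \<tau> \<le> T \<and> j \<in> I \<and> z j \<tau> = 0 \<and> (\<forall>l\<in>I. z l \<tau> \<le> 0) \<and>
    (\<forall>s. 0 \<le> s \<and> s < \<tau> \<longrightarrow> z j s < 0)"
proof -
  define A where "A = (\<Union>j\<in>I. {0..T} \<inter> z j -` {0..})"
  have "closed A"
    unfolding A_def by (intro closed_UN I ballI continuous_closed_preimage cont) auto
  moreover have "t \<in> A" "bdd_below A"
    unfolding A_def using it by (auto intro!: bdd_belowI[of _ 0] bexI[of _ i])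
  ultimately have "Inf A \<in> A"
    using closed_contains_Inf by blast
  define \<tau> where "\<tau> = Inf A"
  obtain j where j: "j \<in> I" "0 \<le> \<tau>" "\<tau> \<le> T" "0 \<le> z j \<tau>"
    using \<open>Inf A \<in> A\<close> unfolding A_def \<tau>_def by auto
  have first: "z l s < 0" if l: "l \<in> I" and s: "0 \<le> s" "s < \<tau>" for l s
  proof (rule ccontr)
    assume "\<not> z l s < 0"
    then have "s \<in> A"
      unfolding A_def using l s j(3) by (auto intro!: bexI[of _ l])
    then show False
      using cInf_lower[OF _ \<open>bdd_below A\<close>, of s] s(2) unfolding \<tau>_def by simp
  qed
  have "0 < \<tau>"
    using j initial[OF j(1)] by (cases "\<tau> = 0") auto
  have nonpos: "z l \<tau> \<le> 0" if l: "l \<in> I" for l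
  proof (rule ccontr)
    assume "\<not> z l \<tau> \<le> 0"
    moreover have "continuous_on {0..\<tau>} (z l)"
      using continuous_on_subset[OF cont[OF l]] j(3) by auto
    ultimately obtain s where "0 \<le> s" "s \<le> \<tau>" "z l s = 0"
      using IVT'[of "z l" 0 0 \<tau>] initial[OF l] j(2) by force
    then show False
      using first[OF l] \<open>\<not> z l \<tau> \<le> 0\<close> by force
  qed
  then show ?thesis
    using \<open>0 < \<tau>\<close> j first[OF j(1)] by (intro exI[of _ \<tau>] exI[of _ j]) (auto intro: order.antisym)
qed

text \<open>A maximum principle: a coordinate that touches \<open>0\<close> first would have to be nondecreasing
  from the left there.\<close>

lemma finite_family_stays_negative:
  fixes z z' :: "nat \<Rightarrow> real \<Rightarrow> real" and I U :: "nat set" and T :: real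
  assumes I: "finite I" "I \<subseteq> U"
    and cont: "\<And>i. i \<in> I \<Longrightarrow> continuous_on {0..T} (z i)"
    and deriv: "\<And>i t. i \<in> I \<Longrightarrow> 0 < t \<Longrightarrow> t \<le> T \<Longrightarrow> (z i has_real_derivative z' i t) (at t within {0..t})"
    and initial: "\<And>i. i \<in> I \<Longrightarrow> z i 0 < 0"
    and outside: "\<And>i t. i \<in> U - I \<Longrightarrow> 0 \<le> t \<Longrightarrow> t \<le> T \<Longrightarrow> z i t < 0"
    and touching: "\<And>i t. i \<in> I \<Longrightarrow> 0 < t \<Longrightarrow> t \<le> T \<Longrightarrow> z i t = 0 \<Longrightarrow> \<forall>l\<in>U. z l t \<le> 0 \<Longrightarrow> z' i t < 0"
    and it: "i \<in> U" "0 \<le> t" "t \<le> T"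
  shows "z i t < 0"
proof (rule ccontr)
  assume "\<not> z i t < 0"
  then have i: "i \<in> I" "0 \<le> z i t"
    using outside it by force+
  obtain \<tau> j where \<tau>: "0 < \<tau>" "\<tau> \<le> T" "j \<in> I" "z j \<tau> = 0" "\<And>l. l \<in> I \<Longrightarrow> z l \<tau> \<le> 0"
    and before: "\<And>s. 0 \<le> s \<Longrightarrow> s < \<tau> \<Longrightarrow> z j s < 0"
    using first_nonneg_time[where z = z and I = I and T = T, OF I(1) cont initial i(1) it(2,3) i(2)] by blast
  have "\<forall>l\<in>U. z l \<tau> \<le> 0"
  proof
    fix l assume "l \<in> U"
    then show "z l \<tau> \<le> 0"
      using \<tau> outside[of l \<tau>] by (cases "l \<in> I") auto
  qed
  then obtain d where d: "d > 0" "\<And>h. 0 < h \<Longrightarrow> \<tau> - h \<in> {0..\<tau>} \<Longrightarrow> h < d \<Longrightarrow> z j \<tau> < z j (\<tau> - h)"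
    using has_real_derivative_neg_dec_left[OF deriv[OF \<tau>(3,1,2)] touching[OF \<tau>(3,1,2,4)]] by blast
  define h where "h = min d \<tau> / 2"
  have "0 < h" "\<tau> - h \<in> {0..\<tau>}" "h < d"
    using d(1) \<tau>(1) unfolding h_def by auto
  then have "0 < z j (\<tau> - h)"
    using d(2) \<tau>(4) by force
  then show False
    using before[of "\<tau> - h"] \<open>0 < h\<close> \<open>\<tau> - h \<in> {0..\<tau>}\<close> by simp
qed

text \<open>The bound in \<open>upward_rate\<close> is what makes \<open>V i = i\<^sup>2 + 1\<close> a Lyapunov function, \<open>G V \<le> 3 V\<close>.\<close>

locale skip_free_generator =
  fixes U :: "nat set" and F :: "nat \<Rightarrow> nat set" and G :: "nat \<Rightarrow> nat \<Rightarrow> real"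
  assumes finite_support: "i \<in> U \<Longrightarrow> finite (F i)"
    and support_subset: "i \<in> U \<Longrightarrow> F i \<subseteq> U \<inter> {..Suc i}"
    and diagonal_in_support: "i \<in> U \<Longrightarrow> i \<in> F i"
    and upward_in_support: "i \<in> U \<Longrightarrow> Suc i \<in> F i"
    and row_sum: "i \<in> U \<Longrightarrow> (\<Sum>l\<in>F i. G i l) = 0"
    and off_diagonal_nonneg: "i \<in> U \<Longrightarrow> l \<in> F i \<Longrightarrow> l \<noteq> i \<Longrightarrow> 0 \<le> G i l"
    and upward_rate: "i \<in> U \<Longrightarrow> G i (Suc i) * (2 * real i + 1) \<le> 3 * (real i ^ 2 + 1)"
begin

lemma lyapunov_drift:
  assumes i: "i \<in> U"
  shows "(\<Sum>l\<in>F i. G i l * (real l ^ 2 + 1)) \<le> 3 * (real i ^ 2 + 1)"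
proof -
  define V :: "nat \<Rightarrow> real" where "V l = real l ^ 2 + 1" for l
  have "(\<Sum>l\<in>F i. G i l * V l) = (\<Sum>l\<in>F i. G i l * (V l - V i))"
    using row_sum[OF i] by (simp add: right_diff_distrib sum_subtractf flip: sum_distrib_right)
  also have "\<dots> \<le> (\<Sum>l\<in>F i. if l = Suc i then G i l * (V l - V i) else 0)"
  proof (rule sum_mono)
    fix l assume l: "l \<in> F i"
    then have "l \<le> Suc i"
      using support_subset[OF i] by auto
    then have "l \<noteq> Suc i \<Longrightarrow> V l \<le> V i"
      unfolding V_def by (simp add: power_mono)
    then show "G i l * (V l - V i) \<le> (if l = Suc i then G i l * (V l - V i) else 0)"
      using off_diagonal_nonneg[OF i l] by (cases "l = i") (auto simp: mult_nonneg_nonpos)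
  qed
  also have "\<dots> = G i (Suc i) * (2 * real i + 1)"
    using finite_support[OF i] upward_in_support[OF i]
    by (simp add: V_def power2_eq_square algebra_simps)
  also have "\<dots> \<le> 3 * V i"
    using upward_rate[OF i] by (simp add: V_def)
  finally show ?thesis
    by (simp add: V_def)
qed

lemma drift_le_at_contact:
  assumes l: "l \<in> U" and c: "0 \<le> c" and contact: "f l = c * (real l ^ 2 + 1)"
    and below: "\<And>m. m \<in> U \<Longrightarrow> f m \<le> c * (real m ^ 2 + 1)"
  shows "(\<Sum>m\<in>F l. G l m * f m) \<le> 3 * c * (real l ^ 2 + 1)"
proof -
  have "G l m * f m \<le> G l m * (c * (real m ^ 2 + 1))" if m: "m \<in> F l" for m
  proof (cases "m = l")
    case False
    then show ?thesis
      using off_diagonal_nonneg[OF l m] support_subset[OF l] below[of m] m by (auto intro: mult_left_mono)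
  qed (simp add: contact)
  then have "(\<Sum>m\<in>F l. G l m * f m) \<le> c * (\<Sum>m\<in>F l. G l m * (real m ^ 2 + 1))"
    by (simp add: sum_mono sum_distrib_left mult_ac)
  also have "\<dots> \<le> c * (3 * (real l ^ 2 + 1))"
    using lyapunov_drift[OF l] c by (rule mult_left_mono)
  finally show ?thesis
    by (simp add: algebra_simps)
qed

context
  fixes y :: "nat \<Rightarrow> real \<Rightarrow> real"
  assumes continuous: "\<And>i. i \<in> U \<Longrightarrow> continuous_on {0..} (y i)"
    and backward: "\<And>i t. i \<in> U \<Longrightarrow> 0 < t \<Longrightarrow>
      (y i has_real_derivative (\<Sum>l\<in>F i. G i l * y l t)) (at t within {0..t})"
    and initial_zero: "\<And>i. i \<in> U \<Longrightarrow> y i 0 = 0"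
    and linear_growth: "\<And>T. \<exists>B. \<forall>i\<in>U. \<forall>t\<in>{0..T}. \<bar>y i t\<bar> \<le> B * (real i + 1)"
begin

text \<open>The barrier \<open>\<epsilon> e\<^sup>4\<^sup>t V i\<close> dominates the solution for large \<open>i\<close> by linear growth, and
  for the finitely many remaining \<open>i\<close> by the maximum principle, since its drift \<open>4 \<epsilon> e\<^sup>4\<^sup>t V\<close>
  exceeds the \<open>3 \<epsilon> e\<^sup>4\<^sup>t V\<close> that the generator can produce.\<close>

lemma below_barrier:
  assumes \<epsilon>: "0 < \<epsilon>" and i: "i \<in> U" and T: "0 \<le> T"
  shows "y i T < \<epsilon> * exp (4 * T) * (real i ^ 2 + 1)"
proof -
  define V :: "nat \<Rightarrow> real" where "V l = real l ^ 2 + 1" for l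
  obtain B where B: "\<And>l t. l \<in> U \<Longrightarrow> t \<in> {0..T} \<Longrightarrow> \<bar>y l t\<bar> \<le> B * (real l + 1)"
    using linear_growth by blast
  define N where "N = nat \<lceil>2 * \<bar>B\<bar> / \<epsilon>\<rceil>"
  define z where "z l t = y l t - \<epsilon> * exp (4 * t) * V l" for l t
  define z' where "z' l t = (\<Sum>m\<in>F l. G l m * y m t) - \<epsilon> * (4 * exp (4 * t)) * V l" for l t
  have "z i T < 0"
  proof (rule finite_family_stays_negative[where z = z and z' = z' and I = "{l\<in>U. l \<le> N}" and U = U])
    show "continuous_on {0..T} (z l)" if "l \<in> {l\<in>U. l \<le> N}" for l
      unfolding z_def using that
      by (intro continuous_intros continuous_on_subset[OF continuous]) auto
    show "(z l has_real_derivative z' l t) (at t within {0..t})" if "l \<in> {l\<in>U. l \<le> N}" "0 < t" for l t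
    proof -
      have y': "(y l has_real_derivative (\<Sum>m\<in>F l. G l m * y m t)) (at t within {0..t})"
        using backward that by simp
      show ?thesis
        unfolding z_def z'_def by (rule derivative_eq_intros y' refl)+ simp
    qed
    show "z l 0 < 0" if "l \<in> {l\<in>U. l \<le> N}" for l
      using initial_zero that \<epsilon> by (simp add: z_def V_def add_nonneg_pos)
    show "z l t < 0" if "l \<in> U - {l\<in>U. l \<le> N}" "0 \<le> t" "t \<le> T" for l t
    proof -
      have "y l t \<le> B * (real l + 1)"
        using B[of l t] that by simp
      also have "\<dots> \<le> \<bar>B\<bar> * (real l + 1)"
        by (intro mult_right_mono) auto
      also have "\<dots> < \<epsilon> * V l"
        using linear_less_quadratic[OF \<epsilon>, of B l] that unfolding N_def V_def by auto
      also have "\<dots> = \<epsilon> * V l * 1"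
        by simp
      also have "\<dots> \<le> \<epsilon> * V l * exp (4 * t)"
        using \<epsilon> that by (intro mult_left_mono) (auto simp: V_def)
      also have "\<dots> = \<epsilon> * exp (4 * t) * V l"
        by simp
      finally show ?thesis
        by (simp add: z_def)
    qed
    show "z' l t < 0" if l: "l \<in> {l\<in>U. l \<le> N}" and "0 < t" "z l t = 0" "\<forall>m\<in>U. z m t \<le> 0" for l t
    proof -
      have "(\<Sum>m\<in>F l. G l m * y m t) \<le> 3 * (\<epsilon> * exp (4 * t)) * V l"
        using that \<epsilon> unfolding V_def z_def by (intro drift_le_at_contact) auto
      also have "\<dots> < \<epsilon> * (4 * exp (4 * t)) * V l"
        using \<epsilon> by (simp add: V_def add_pos_nonneg)
      finally show ?thesis
        by (simp add: z'_def)
    qed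
  qed (use i T in auto)
  then show ?thesis
    by (simp add: z_def V_def)
qed

lemma solution_nonpos:
  assumes "i \<in> U" "0 \<le> t"
  shows "y i t \<le> 0"
proof (rule ccontr)
  assume "\<not> y i t \<le> 0"
  define E where "E = exp (4 * t) * (real i ^ 2 + 1)"
  have "0 < E"
    unfolding E_def by (simp add: add_nonneg_pos)
  with \<open>\<not> y i t \<le> 0\<close> have "0 < y i t / (2 * E)"
    by simp
  from below_barrier[OF this assms] have "y i t < y i t / (2 * E) * E"
    unfolding E_def by (simp add: mult.assoc)
  also have "\<dots> = y i t / 2"
    using \<open>0 < E\<close> by simp
  finally have "y i t < y i t / 2" .
  then show False
    using \<open>\<not> y i t \<le> 0\<close> by simp
qed

end

lemma backward_solution_eq_0:
  assumes "\<And>i. i \<in> U \<Longrightarrow> continuous_on {0..} (y i)"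
    and "\<And>i t. i \<in> U \<Longrightarrow> 0 < t \<Longrightarrow>
      (y i has_real_derivative (\<Sum>l\<in>F i. G i l * y l t)) (at t within {0..t})"
    and "\<And>i. i \<in> U \<Longrightarrow> y i 0 = 0"
    and "\<And>T. \<exists>B. \<forall>i\<in>U. \<forall>t\<in>{0..T}. \<bar>y i t\<bar> \<le> B * (real i + 1)"
    and "i \<in> U" "0 \<le> t"
  shows "y i t = 0"
proof -
  have "- y i t \<le> 0"
  proof (rule solution_nonpos[of "\<lambda>i t. - y i t"])
    show "((\<lambda>t. - y i t) has_real_derivative (\<Sum>l\<in>F i. G i l * - y l t)) (at t within {0..t})"
      if "i \<in> U" "0 < t" for i t
      using DERIV_minus[OF assms(2)[OF that]] by (simp add: sum_negf)
  qed (use assms in \<open>auto intro: continuous_intros\<close>)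
  moreover have "y i t \<le> 0"
    by (rule solution_nonpos) (use assms in auto)
  ultimately show ?thesis
    by simp
qed

end

section \<open>The generators of the degree process\<close>

lemma binomial_sum_lessThan:
  fixes p :: real
  shows "(\<Sum>l<i. real (i choose l) * p ^ l * (1 - p) ^ (i - l)) = 1 - p ^ i"
proof -
  have "1 = (p + (1 - p)) ^ i"
    by simp
  also have "\<dots> = (\<Sum>l<i. real (i choose l) * p ^ l * (1 - p) ^ (i - l)) + p ^ i"
    unfolding binomial_ring by (simp add: lessThan_Suc_atMost[symmetric])
  finally show ?thesis
    by simp
qed

lemma Qgen_row_sum: "(\<Sum>l\<le>Suc i. Qgen p i l) = 0"
proof -
  have "{..Suc i} = insert (Suc i) (insert i {..<i})"
    by auto
  then have "(\<Sum>l\<le>Suc i. Qgen p i l) = Qgen p i (Suc i) + Qgen p i i + (\<Sum>l<i. Qgen p i l)"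
    by simp
  also have "(\<Sum>l<i. Qgen p i l) = (\<Sum>l<i. real (i choose l) * p ^ l * (1 - p) ^ (i - l))"
    by (rule sum.cong) (auto simp: Qgen_def)
  finally show ?thesis
    by (simp add: binomial_sum_lessThan Qgen_def)
qed

lemma Qbar_row_sum:
  assumes "1 \<le> i"
  shows "(\<Sum>l\<in>{1..Suc i}. Qbar p i l) = 0"
proof -
  obtain n where n: "i = Suc n"
    using assms by (cases i) auto
  have "(\<Sum>l\<in>{1..<i}. Qbar p i l) = (\<Sum>m<n. Qbar p i (Suc m))"
    unfolding n by (rule sum.reindex_bij_witness[where i = Suc and j = "\<lambda>l. l - 1"]) auto
  also have "\<dots> = p * (\<Sum>m<n. real (n choose m) * p ^ m * (1 - p) ^ (n - m))"
    unfolding sum_distrib_left by (rule sum.cong) (auto simp: Qbar_def n)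
  also have "\<dots> = p - p ^ i"
    unfolding binomial_sum_lessThan n by (simp add: algebra_simps)
  finally have "(\<Sum>l\<in>{1..<i}. Qbar p i l) = p - p ^ i" .
  moreover have "{1..Suc i} = insert (Suc i) (insert i {1..<i})"
    using assms by auto
  ultimately show ?thesis
    by (simp add: Qbar_def algebra_simps)
qed

lemma Qgen_nonneg: "0 \<le> p \<Longrightarrow> p \<le> 1 \<Longrightarrow> l \<noteq> i \<Longrightarrow> 0 \<le> Qgen p i l"
  by (auto simp: Qgen_def)

lemma Qgen_skip_free:
  assumes "0 \<le> p" "p \<le> 1"
  shows "skip_free_generator UNIV (\<lambda>i. {..Suc i}) (Qgen p)"
proof
  show "Qgen p i (Suc i) * (2 * real i + 1) \<le> 3 * (real i ^ 2 + 1)" for i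
  proof -
    have "Qgen p i (Suc i) * (2 * real i + 1) = p * (real i * (2 * real i + 1))"
      by (simp add: Qgen_def)
    also have "\<dots> \<le> 1 * (real i * (2 * real i + 1))"
      using assms by (intro mult_right_mono) auto
    also have "\<dots> \<le> 3 * (real i ^ 2 + 1)"
      using zero_le_power2[of "real i - 1"] by (simp add: power2_eq_square algebra_simps)
    finally show ?thesis .
  qed
qed (use Qgen_row_sum Qgen_nonneg assms in auto)

lemma Qgen_mult_eq_Qbar:
  assumes "1 \<le> l"
  shows "Qgen p i l * real l = real i * Qbar p i l + (if l = i then (2 * p - 1) * real i else 0)"
proof -
  consider "l = Suc i" | "l = i" | "l < i" | "Suc i < l"
    by linarith
  then show ?thesis
  proof cases
    case 3
    obtain n m where n: "i = Suc n" and m: "l = Suc m"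
      using assms 3 by (cases i; cases l) auto
    have "real (i choose l) * real l = real i * real ((i - 1) choose (l - 1))"
      unfolding n m using Suc_times_binomial_eq[of n m]
      by (simp only: of_nat_mult[symmetric]) (simp add: mult.commute)
    then show ?thesis
      using 3 assms by (simp add: Qgen_def Qbar_def algebra_simps)
  qed (use assms in \<open>auto simp: Qgen_def Qbar_def algebra_simps\<close>)
qed

section \<open>The Doob transform\<close>

definition doob_transform :: "real \<Rightarrow> (real \<Rightarrow> nat \<Rightarrow> nat \<Rightarrow> real) \<Rightarrow> real \<Rightarrow> nat \<Rightarrow> nat \<Rightarrow> real" where
  "doob_transform p Pbar t i k =
     (if i = 0 then 0 else real i / real k * exp ((2 * p - 1) * t) * Pbar t i k)"

lemma Qgen_sum_doob_transform:
  assumes "i \<noteq> 0"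
  shows "(\<Sum>l\<le>Suc i. Qgen p i l * doob_transform p Pbar t l k) =
    exp ((2 * p - 1) * t) / real k * (real i * (\<Sum>l\<in>{1..Suc i}. Qbar p i l * Pbar t l k)
      + (2 * p - 1) * real i * Pbar t i k)"
proof -
  define e where "e = exp ((2 * p - 1) * t)"
  have "{..Suc i} = insert 0 {1..Suc i}"
    by auto
  then have "(\<Sum>l\<le>Suc i. Qgen p i l * doob_transform p Pbar t l k) =
      (\<Sum>l\<in>{1..Suc i}. e / real k * (Qgen p i l * real l) * Pbar t l k)"
    by (simp add: doob_transform_def e_def mult_ac)
  also have "\<dots> = (\<Sum>l\<in>{1..Suc i}. e / real k * (real i * (Qbar p i l * Pbar t l k))
      + (if l = i then e / real k * ((2 * p - 1) * real i * Pbar t i k) else 0))"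
  proof (rule sum.cong)
    fix l assume "l \<in> {1..Suc i}"
    then have "Qgen p i l * real l = real i * Qbar p i l + (if l = i then (2 * p - 1) * real i else 0)"
      by (intro Qgen_mult_eq_Qbar) auto
    then show "e / real k * (Qgen p i l * real l) * Pbar t l k = e / real k * (real i * (Qbar p i l * Pbar t l k))
        + (if l = i then e / real k * ((2 * p - 1) * real i * Pbar t i k) else 0)"
      unfolding \<open>Qgen p i l * real l = _\<close> by (cases "l = i") (simp_all add: algebra_simps)
  qed simp
  also have "\<dots> = e / real k * (real i * (\<Sum>l\<in>{1..Suc i}. Qbar p i l * Pbar t l k))
      + e / real k * ((2 * p - 1) * real i * Pbar t i k)"
    using assms by (simp only: sum.distrib sum.delta sum_distrib_left[symmetric]) simp
  finally show ?thesis
    unfolding e_def by (simp add: distrib_left)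
qed

lemma doob_transform_backward:
  assumes Pbar: "ctmc {1..} (Qbar p) Pbar" and k: "1 \<le> k" and t: "0 < t"
  shows "((\<lambda>s. doob_transform p Pbar s i k) has_real_derivative
      (\<Sum>l\<le>Suc i. Qgen p i l * doob_transform p Pbar t l k)) (at t within {0..t})"
proof (cases "i = 0")
  case True
  then show ?thesis
    by (simp add: doob_transform_def Qgen_def)
next
  case False
  have Pbar': "((\<lambda>s. Pbar s i k) has_real_derivative (\<Sum>l\<in>{1..Suc i}. Qbar p i l * Pbar t l k))
      (at t within {0..t})"
    using False k t by (intro ctmc.backward_equation[OF Pbar] Qbar_row_sum) auto
  have eq: "(\<lambda>s. doob_transform p Pbar s i k) = (\<lambda>s. real i / real k * exp ((2 * p - 1) * s) * Pbar s i k)"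
    using False by (simp add: doob_transform_def)
  show ?thesis
    unfolding Qgen_sum_doob_transform[OF False] eq
    by (rule derivative_eq_intros Pbar' refl)+ (simp add: divide_inverse algebra_simps)
qed

lemma abs_doob_transform_le:
  assumes p: "0 \<le> p" "p \<le> 1" and Pbar: "ctmc {1..} (Qbar p) Pbar" and k: "1 \<le> k"
    and t: "0 \<le> t" "t \<le> T"
  shows "\<bar>doob_transform p Pbar t i k\<bar> \<le> real i * exp T"
proof (cases "i = 0")
  case False
  have "real i / real k \<le> real i"
    using k by (simp add: divide_le_eq mult_le_cancel_left1)
  moreover have "(2 * p - 1) * t \<le> 1 * T"
    using p t by (intro mult_mono) auto
  then have "exp ((2 * p - 1) * t) \<le> exp T"
    by simp
  ultimately have "real i / real k * exp ((2 * p - 1) * t) * Pbar t i k \<le> real i * exp T * 1"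
    using t k False ctmc.le_1[OF Pbar, of t i k] ctmc.nonneg[OF Pbar, of t i k] by (intro mult_mono) auto
  then show ?thesis
    using False k t ctmc.nonneg[OF Pbar, of t i k] by (simp add: doob_transform_def)
qed (simp add: doob_transform_def)

text \<open>Both sides solve the backward equations of \<open>Qgen\<close> with the same initial values, and the
  solution is unique among functions of linear growth in the initial state.\<close>

theorem transition_eq_doob_transform:
  assumes p: "0 \<le> p" "p \<le> 1" and P: "ctmc UNIV (Qgen p) P" and Pbar: "ctmc {1..} (Qbar p) Pbar"
    and k: "1 \<le> k" and t: "0 \<le> t"
  shows "P t i k = doob_transform p Pbar t i k"
proof -
  interpret P: ctmc UNIV "Qgen p" P by (fact P)
  interpret Pbar: ctmc "{1..}" "Qbar p" Pbar by (fact Pbar)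
  interpret skip_free_generator UNIV "\<lambda>i. {..Suc i}" "Qgen p" by (rule Qgen_skip_free[OF p])
  have growth: "\<bar>P t i k - doob_transform p Pbar t i k\<bar> \<le> (1 + exp T) * (real i + 1)"
    if "t \<in> {0..T}" for i t T
  proof -
    have "\<bar>P t i k\<bar> \<le> 1"
      using P.nonneg[of t i k] P.le_1[of t i k] that by auto
    moreover have "1 + real i * exp T \<le> (1 + exp T) * (real i + 1)"
      by (simp add: algebra_simps)
    ultimately show ?thesis
      using abs_triangle_ineq4[of "P t i k" "doob_transform p Pbar t i k"]
        abs_doob_transform_le[OF p Pbar k, of t T i] that by simp
  qed
  have "P t i k - doob_transform p Pbar t i k = 0"
  proof (rule backward_solution_eq_0[where y = "\<lambda>i t. P t i k - doob_transform p Pbar t i k"])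
    show "continuous_on {0..} (\<lambda>t. P t i k - doob_transform p Pbar t i k)" for i
      unfolding doob_transform_def
      using P.continuous_on[of i k] Pbar.continuous_on[of i k] k
      by (cases "i = 0") (auto intro!: continuous_intros)
    show "((\<lambda>t. P t i k - doob_transform p Pbar t i k) has_real_derivative
        (\<Sum>l\<in>{..Suc i}. Qgen p i l * (P t l k - doob_transform p Pbar t l k))) (at t within {0..t})"
      if "0 < t" for i t
      using DERIV_diff[OF P.backward_equation[OF _ _ _ _ Qgen_row_sum that]
          doob_transform_backward[OF Pbar k that]]
      by (simp add: right_diff_distrib sum_subtractf)
    show "\<exists>B. \<forall>i\<in>UNIV. \<forall>t\<in>{0..T}. \<bar>P t i k - doob_transform p Pbar t i k\<bar> \<le> B * (real i + 1)" for T
      using growth by blast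
  qed (use P.initial Pbar.initial k t in \<open>auto simp: doob_transform_def\<close>)
  then show ?thesis
    by simp
qed

lemma transition_eq_scaled:
  assumes p: "0 \<le> p" "p \<le> 1" and P: "ctmc UNIV (Qgen p) P" and Pbar: "ctmc {1..} (Qbar p) Pbar"
    and i: "1 \<le> i" and t: "0 \<le> t"
  shows "P t j i = real j * exp ((2 * p - 1) * t) * (Pbar t j i / real i)"
  using transition_eq_doob_transform[OF p P Pbar i t] by (simp add: doob_transform_def)

lemma transition_mult_exp_eq:
  assumes "0 \<le> p" "p \<le> 1" "ctmc UNIV (Qgen p) P" "ctmc {1..} (Qbar p) Pbar" "1 \<le> k" "0 \<le> t"
  shows "P t j k * exp ((1 - 2 * p) * t) = real j / real k * Pbar t j k"
proof -
  have "exp ((2 * p - 1) * t) * exp ((1 - 2 * p) * t) = 1"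
    by (simp add: algebra_simps flip: exp_add)
  then show ?thesis
    using transition_eq_scaled[OF assms] by (simp add: algebra_simps)
qed

lemma transition_ratio_eq:
  assumes "0 \<le> p" "p \<le> 1" "ctmc UNIV (Qgen p) P" "ctmc {1..} (Qbar p) Pbar"
    and j: "1 \<le> j" and k: "1 \<le> k" and t: "0 \<le> t"
  shows "P t j k / infsum (\<lambda>i. P t j i) {1..} = Pbar t j k / real k / (\<Sum>\<^sub>\<infinity>i\<in>{1..}. Pbar t j i / real i)"
proof -
  note scaled = transition_eq_scaled[OF assms(1-4) _ t, of _ j]
  have "infsum (\<lambda>i. P t j i) {1..} = (\<Sum>\<^sub>\<infinity>i\<in>{1..}. real j * exp ((2 * p - 1) * t) * (Pbar t j i / real i))"
    by (rule infsum_cong) (simp add: scaled)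
  also have "\<dots> = real j * exp ((2 * p - 1) * t) * (\<Sum>\<^sub>\<infinity>i\<in>{1..}. Pbar t j i / real i)"
    by (rule infsum_cmult_right')
  finally show ?thesis
    using scaled[OF k] j by simp
qed

section \<open>Irreducibility and transience of \<open>Qbar\<close>\<close>

lemma Qbar_irreducible:
  assumes p: "0 < p" "p < 1" and Pbar: "ctmc {1..} (Qbar p) Pbar"
  shows "irreducible_ctmc {1..} (Qbar p) Pbar"
proof -
  interpret ctmc "{1..}" "Qbar p" Pbar by (fact Pbar)
  have down: "0 < Pbar t i 1" if "1 \<le> i" "0 < t" for i t
  proof (cases "i = 1")
    case True
    then show ?thesis
      using diagonal_pos[of 1 t] that by simp
  next
    case False
    then have "0 < Qbar p i 1"
      using that p by (simp add: Qbar_def)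
    then show ?thesis
      using pos_of_rate_pos[of i 1 t] that False by simp
  qed
  have up: "0 < Pbar t 1 k" if "1 \<le> k" "0 < t" for k t
    using that
  proof (induction k arbitrary: t rule: nat_induct_at_least)
    case base
    then show ?case
      using diagonal_pos[of 1 t] by simp
  next
    case (Suc k)
    have "0 < Pbar s k (Suc k)" if "0 < s" for s
      using pos_of_rate_pos[of k "Suc k" s] that Suc.hyps p by (simp add: Qbar_def)
    then show ?case
      using Suc by (intro pos_trans[of 1 k "Suc k"]) auto
  qed
  show ?thesis
  proof (intro irreducible_ctmc.intro irreducible_ctmc_axioms.intro Pbar)
    fix t :: real and i k :: nat assume "0 < t" "i \<in> {1..}" "k \<in> {1..}"
    then show "0 < Pbar t i k"
      using down up by (intro pos_trans[of i 1 k]) auto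
  qed
qed

text \<open>For \<open>p = 1\<close> all downward rates of \<open>Qbar\<close> vanish: it is a pure birth process.\<close>

lemma Qbar_1_never_decreases:
  assumes Pbar: "ctmc {1..} (Qbar 1) Pbar" and k: "1 \<le> k" "k < i" and t: "0 \<le> t"
  shows "Pbar t i k = 0"
proof -
  interpret ctmc "{1..}" "Qbar 1" Pbar by (fact Pbar)
  interpret skip_free_generator "{Suc k..}" "\<lambda>i. {i, Suc i}" "Qbar 1"
  proof
    show "Qbar 1 i (Suc i) * (2 * real i + 1) \<le> 3 * (real i ^ 2 + 1)" for i
    proof -
      have "0 \<le> (real i - 1) * (real i - 2)"
      proof (cases "i \<le> 1")
        case True
        then have "i = 0 \<or> i = 1"
          by auto
        then show ?thesis
          by auto
      qed simp
      then show ?thesis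
        by (simp add: Qbar_def power2_eq_square algebra_simps)
    qed
  qed (auto simp: Qbar_def)
  show ?thesis
  proof (rule backward_solution_eq_0[where y = "\<lambda>i t. Pbar t i k"])
    show "continuous_on {0..} (\<lambda>t. Pbar t i k)" if "i \<in> {Suc k..}" for i
      using continuous_on[of i k] that k by simp
    show "((\<lambda>t. Pbar t i k) has_real_derivative (\<Sum>l\<in>{i, Suc i}. Qbar 1 i l * Pbar t l k)) (at t within {0..t})"
      if "i \<in> {Suc k..}" "0 < t" for i t
      by (rule backward_equation) (use that k in \<open>auto simp: Qbar_def\<close>)
    show "\<exists>B. \<forall>i\<in>{Suc k..}. \<forall>t\<in>{0..T}. \<bar>Pbar t i k\<bar> \<le> B * (real i + 1)" for T
    proof (intro exI[of _ 1] ballI)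
      fix i t assume "i \<in> {Suc k..}" "t \<in> {0..T}"
      then show "\<bar>Pbar t i k\<bar> \<le> 1 * (real i + 1)"
        using nonneg[of t i k] le_1[of t i k] k by auto
    qed
  qed (use initial k t in auto)
qed

lemma Qbar_1_no_stationary_distribution:
  assumes Pbar: "ctmc {1..} (Qbar 1) Pbar"
  shows "\<not> stationary_distribution {1..} Pbar u"
proof
  assume "stationary_distribution {1..} Pbar u"
  then have stationary: "\<And>k. 1 \<le> k \<Longrightarrow> ((\<lambda>l. u l * Pbar 1 l k) has_sum u k) {1..}"
    and u: "\<And>k. 1 \<le> k \<Longrightarrow> 0 \<le> u k" "(u has_sum 1) {1..}"
    unfolding stationary_distribution_def by auto
  interpret ctmc "{1..}" "Qbar 1" Pbar by (fact Pbar)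
  have "u k = 0" if "1 \<le> k" for k
    using that
  proof (induction k rule: less_induct)
    case (less k)
    have "((\<lambda>l. u l * Pbar 1 l k) has_sum u k - u k * Pbar 1 k k) ({1..} - {k})"
      using has_sum_Diff_finite[OF stationary[OF less.prems], of "{k}"] less.prems by simp
    moreover have "((\<lambda>l. u l * Pbar 1 l k) has_sum 0) ({1..} - {k})"
    proof (rule has_sum_0)
      fix l assume l: "l \<in> {1..} - {k}"
      show "u l * Pbar 1 l k = 0"
        using less.IH[of l] Qbar_1_never_decreases[OF Pbar less.prems, of l 1] l
        by (cases "l < k") auto
    qed
    ultimately have "u k - u k * Pbar 1 k k = 0"
      by (rule has_sum_unique)
    then have "u k * (1 - Pbar 1 k k) = 0"
      by (simp add: algebra_simps)
    moreover have "Pbar 1 k k < 1"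
    proof -
      have "0 < Pbar 1 k (Suc k)"
        using pos_of_rate_pos[of k "Suc k" 1] less.prems by (simp add: Qbar_def)
      moreover have "Pbar 1 k k + Pbar 1 k (Suc k) \<le> 1"
        using finite_sum_le_has_sum[OF row_has_sum[of 1 k], of "{k, Suc k}"] less.prems nonneg[of 1 k]
        by auto
      ultimately show ?thesis
        by simp
    qed
    ultimately show ?case
      by simp
  qed
  then have "(u has_sum 0) {1..}"
    by (intro has_sum_0) auto
  then show False
    using u(2) has_sum_unique by fastforce
qed

section \<open>Convergence to the stationary distribution\<close>

lemma tendsto_infsum_abs:
  fixes w :: "nat \<Rightarrow> 'a \<Rightarrow> real"
  assumes "\<And>n. w n summable_on S" "v summable_on S"
    and "(\<lambda>n. \<Sum>\<^sub>\<infinity>k\<in>S. \<bar>w n k - v k\<bar>) \<longlonglongrightarrow> 0"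
  shows "(\<lambda>n. \<Sum>\<^sub>\<infinity>k\<in>S. \<bar>w n k\<bar>) \<longlonglongrightarrow> (\<Sum>\<^sub>\<infinity>k\<in>S. \<bar>v k\<bar>)"
proof -
  have "(\<lambda>n. (\<Sum>\<^sub>\<infinity>k\<in>S. \<bar>w n k\<bar>) - (\<Sum>\<^sub>\<infinity>k\<in>S. \<bar>v k\<bar>)) \<longlonglongrightarrow> 0"
  proof (rule Lim_null_comparison[OF _ assms(3)])
    show "\<forall>\<^sub>F n in sequentially. norm ((\<Sum>\<^sub>\<infinity>k\<in>S. \<bar>w n k\<bar>) - (\<Sum>\<^sub>\<infinity>k\<in>S. \<bar>v k\<bar>))
        \<le> (\<Sum>\<^sub>\<infinity>k\<in>S. \<bar>w n k - v k\<bar>)"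
      using abs_infsum_abs_diff_le[OF assms(1,2)] by simp
  qed
  then show ?thesis
    by (simp add: LIM_zero_iff)
qed

lemma (in stochastic_matrix) tendsto_L1_vecmat:
  assumes "\<And>n. w n summable_on S" "v summable_on S"
    and "(\<lambda>n. \<Sum>\<^sub>\<infinity>k\<in>S. \<bar>w n k - v k\<bar>) \<longlonglongrightarrow> 0"
  shows "(\<lambda>n. \<Sum>\<^sub>\<infinity>k\<in>S. \<bar>\<Sum>\<^sub>\<infinity>l\<in>S. w n l * M l k\<bar>) \<longlonglongrightarrow> (\<Sum>\<^sub>\<infinity>k\<in>S. \<bar>\<Sum>\<^sub>\<infinity>l\<in>S. v l * M l k\<bar>)"
proof (rule tendsto_infsum_abs[OF summable_on_vecmat[OF assms(1)] summable_on_vecmat[OF assms(2)]])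
  have "(\<Sum>\<^sub>\<infinity>k\<in>S. \<bar>(\<Sum>\<^sub>\<infinity>l\<in>S. w n l * M l k) - (\<Sum>\<^sub>\<infinity>l\<in>S. v l * M l k)\<bar>)
      = (\<Sum>\<^sub>\<infinity>k\<in>S. \<bar>\<Sum>\<^sub>\<infinity>l\<in>S. (w n l - v l) * M l k\<bar>)" for n
  proof (rule infsum_cong)
    fix k assume "k \<in> S"
    then show "\<bar>(\<Sum>\<^sub>\<infinity>l\<in>S. w n l * M l k) - (\<Sum>\<^sub>\<infinity>l\<in>S. v l * M l k)\<bar> = \<bar>\<Sum>\<^sub>\<infinity>l\<in>S. (w n l - v l) * M l k\<bar>"
      using infsum_diff[OF summable_on_column[OF assms(1)] summable_on_column[OF assms(2)]]
      by (simp add: left_diff_distrib)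
  qed
  also have "\<dots> n \<le> (\<Sum>\<^sub>\<infinity>k\<in>S. \<bar>w n k - v k\<bar>)" for n
    by (intro L1_contraction summable_on_diff assms)
  finally have bound: "(\<Sum>\<^sub>\<infinity>k\<in>S. \<bar>(\<Sum>\<^sub>\<infinity>l\<in>S. w n l * M l k) - (\<Sum>\<^sub>\<infinity>l\<in>S. v l * M l k)\<bar>)
      \<le> (\<Sum>\<^sub>\<infinity>k\<in>S. \<bar>w n k - v k\<bar>)" for n .
  show "(\<lambda>n. \<Sum>\<^sub>\<infinity>k\<in>S. \<bar>(\<Sum>\<^sub>\<infinity>l\<in>S. w n l * M l k) - (\<Sum>\<^sub>\<infinity>l\<in>S. v l * M l k)\<bar>) \<longlonglongrightarrow> 0"
  proof (rule Lim_null_comparison[OF _ assms(3)])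
    show "\<forall>\<^sub>F n in sequentially. norm (\<Sum>\<^sub>\<infinity>k\<in>S. \<bar>(\<Sum>\<^sub>\<infinity>l\<in>S. w n l * M l k) - (\<Sum>\<^sub>\<infinity>l\<in>S. v l * M l k)\<bar>)
        \<le> (\<Sum>\<^sub>\<infinity>k\<in>S. \<bar>w n k - v k\<bar>)"
      using bound by (simp add: infsum_nonneg)
  qed
qed

context irreducible_ctmc
begin

context
  fixes u :: "nat \<Rightarrow> real"
  assumes stationary: "stationary_distribution S P u"
begin

lemma stationary_nonneg: "k \<in> S \<Longrightarrow> 0 \<le> u k"
  and stationary_has_sum: "(u has_sum 1) S"
  and stationary_invariant: "0 \<le> t \<Longrightarrow> k \<in> S \<Longrightarrow> ((\<lambda>l. u l * P t l k) has_sum u k) S"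
  using stationary unfolding stationary_distribution_def by auto

lemma stationary_pos:
  assumes j: "j \<in> S"
  shows "0 < u j"
proof -
  obtain l where l: "l \<in> S" "u l \<noteq> 0"
    using stationary_has_sum has_sum_0[of S u] has_sum_unique by force
  have "0 < u l * P 1 l j"
    using l stationary_nonneg[of l] transition_pos[of 1 l j] j by simp
  also have "\<dots> \<le> u j"
    using has_sum_nonneg_term_le[OF stationary_invariant[OF _ j] l(1)] stationary_nonneg nonneg j
    by simp
  finally show ?thesis .
qed

lemma transition_le_stationary_ratio:
  assumes "0 \<le> t" "j \<in> S" "k \<in> S"
  shows "P t j k \<le> u k / u j"
proof -
  have "u j * P t j k \<le> u k"
    using has_sum_nonneg_term_le[OF stationary_invariant assms(2)] stationary_nonneg nonneg assms
    by simp
  then show ?thesis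
    using stationary_pos[OF assms(2)] by (simp add: field_simps)
qed

lemma summable_on_deviation:
  "0 \<le> t \<Longrightarrow> j \<in> S \<Longrightarrow> (\<lambda>k. P t j k - u k) summable_on S"
  using row_has_sum stationary_has_sum by (intro summable_on_diff) (auto dest: has_sum_imp_summable)

lemma L1_deviation_add:
  assumes "0 \<le> t" "0 \<le> s" "j \<in> S"
  shows "(\<Sum>\<^sub>\<infinity>k\<in>S. \<bar>P (t + s) j k - u k\<bar>) = (\<Sum>\<^sub>\<infinity>k\<in>S. \<bar>\<Sum>\<^sub>\<infinity>l\<in>S. (P t j l - u l) * P s l k\<bar>)"
proof (rule infsum_cong)
  fix k assume "k \<in> S"
  then have "((\<lambda>l. (P t j l - u l) * P s l k) has_sum (P (t + s) j k - u k)) S"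
    using has_sum_diff[OF chapman_kolmogorov stationary_invariant] assms
    by (simp add: left_diff_distrib)
  then show "\<bar>P (t + s) j k - u k\<bar> = \<bar>\<Sum>\<^sub>\<infinity>l\<in>S. (P t j l - u l) * P s l k\<bar>"
    by (simp add: infsumI)
qed

lemma L1_deviation_antimono:
  assumes "0 \<le> t" "t \<le> t'" "j \<in> S"
  shows "(\<Sum>\<^sub>\<infinity>k\<in>S. \<bar>P t' j k - u k\<bar>) \<le> (\<Sum>\<^sub>\<infinity>k\<in>S. \<bar>P t j k - u k\<bar>)"
proof -
  interpret stochastic_matrix S "P (t' - t)"
    using assms by (intro stochastic_matrix) simp
  show ?thesis
    using L1_deviation_add[of t "t' - t" j] L1_contraction[OF summable_on_deviation] assms by simp
qed

text \<open>Tightness: the rows \<open>P t j\<close> are dominated by the summable \<open>u / u j\<close>.\<close>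

lemma subsequence_L1_convergent:
  assumes j: "j \<in> S"
  obtains \<sigma> :: "nat \<Rightarrow> nat" and \<mu> :: "nat \<Rightarrow> real"
  where "strict_mono \<sigma>" "\<mu> summable_on S" "infsum \<mu> S = 1"
    "(\<lambda>n. \<Sum>\<^sub>\<infinity>k\<in>S. \<bar>P (real (\<sigma> n)) j k - \<mu> k\<bar>) \<longlonglongrightarrow> 0"
proof -
  define f where "f n k = (if k \<in> S then P (real n) j k else 0)" for n k
  have "\<bar>f n k\<bar> \<le> 1" for n k
    unfolding f_def using nonneg[of "real n" j k] le_1[of "real n" j k] j by auto
  then obtain \<sigma> where \<sigma>: "strict_mono \<sigma>" "\<And>k. convergent (\<lambda>n. f (\<sigma> n) k)"
    using bounded_double_seq_pointwise_convergent_subseq by blast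
  define \<mu> where "\<mu> k = lim (\<lambda>n. f (\<sigma> n) k)" for k
  have lim: "(\<lambda>n. P (real (\<sigma> n)) j k) \<longlonglongrightarrow> \<mu> k" if "k \<in> S" for k
    using \<sigma>(2)[of k] that unfolding \<mu>_def f_def by (simp add: convergent_LIMSEQ_iff)
  define g where "g k = u k / u j" for k
  have "(\<lambda>k. u k * (1 / u j)) summable_on S"
    using stationary_has_sum by (intro summable_on_cmult_left) (auto dest: has_sum_imp_summable)
  then have g: "g summable_on S"
    by (simp add: g_def[abs_def])
  have \<mu>: "0 \<le> \<mu> k \<and> \<mu> k \<le> g k" if k: "k \<in> S" for k
    using tendsto_lowerbound[OF lim[OF k]] tendsto_upperbound[OF lim[OF k]]
      nonneg[OF _ j k] transition_le_stationary_ratio[OF _ j k]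
    unfolding g_def by simp
  have \<mu>_summable: "\<mu> summable_on S"
    by (rule summable_on_comparison_test[OF g]) (use \<mu> in auto)
  have L1: "(\<lambda>n. \<Sum>\<^sub>\<infinity>k\<in>S. \<bar>P (real (\<sigma> n)) j k - \<mu> k\<bar>) \<longlonglongrightarrow> 0"
  proof (rule infsum_abs_tendsto_0_dominated[OF g])
    show "\<bar>P (real (\<sigma> n)) j k - \<mu> k\<bar> \<le> g k" if "k \<in> S" for n k
      using \<mu>[OF that] nonneg[of "real (\<sigma> n)" j k] transition_le_stationary_ratio[of "real (\<sigma> n)" j k]
        that j unfolding g_def by auto
    show "(\<lambda>n. P (real (\<sigma> n)) j k - \<mu> k) \<longlonglongrightarrow> 0" if "k \<in> S" for k
      using lim[OF that] by (simp add: LIM_zero)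
  qed
  have "infsum \<mu> S = 1"
  proof -
    have "\<bar>1 - infsum \<mu> S\<bar> \<le> (\<Sum>\<^sub>\<infinity>k\<in>S. \<bar>P (real (\<sigma> n)) j k - \<mu> k\<bar>)" for n
      using abs_infsum_diff_le[OF has_sum_imp_summable[OF row_has_sum[of "real (\<sigma> n)" j]] \<mu>_summable]
        infsumI[OF row_has_sum[of "real (\<sigma> n)" j]] j by simp
    then have "\<bar>1 - infsum \<mu> S\<bar> \<le> 0"
      by (intro LIMSEQ_le_const[OF L1]) auto
    then show ?thesis
      by simp
  qed
  with that \<sigma>(1) \<mu>_summable L1 show ?thesis
    by blast
qed

lemma L1_deviation_subsequence_limits:
  assumes j: "j \<in> S" and \<sigma>: "strict_mono \<sigma>" and \<mu>: "\<mu> summable_on S"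
    and L1: "(\<lambda>n. \<Sum>\<^sub>\<infinity>k\<in>S. \<bar>P (real (\<sigma> n)) j k - \<mu> k\<bar>) \<longlonglongrightarrow> 0"
    and c: "(\<lambda>n. \<Sum>\<^sub>\<infinity>k\<in>S. \<bar>P (real n) j k - u k\<bar>) \<longlonglongrightarrow> c"
  shows "c = (\<Sum>\<^sub>\<infinity>k\<in>S. \<bar>\<mu> k - u k\<bar>)"
    and "c = (\<Sum>\<^sub>\<infinity>k\<in>S. \<bar>\<Sum>\<^sub>\<infinity>l\<in>S. (\<mu> l - u l) * P 1 l k\<bar>)"
proof -
  have w: "(\<lambda>k. \<mu> k - u k) summable_on S"
    using \<mu> stationary_has_sum by (intro summable_on_diff) (auto dest: has_sum_imp_summable)
  have deviation: "\<And>n. (\<lambda>k. P (real (\<sigma> n)) j k - u k) summable_on S"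
    using summable_on_deviation j by simp
  have close: "(\<lambda>n. \<Sum>\<^sub>\<infinity>k\<in>S. \<bar>(P (real (\<sigma> n)) j k - u k) - (\<mu> k - u k)\<bar>) \<longlonglongrightarrow> 0"
    using L1 by simp
  have "(\<lambda>n. \<Sum>\<^sub>\<infinity>k\<in>S. \<bar>P (real (\<sigma> n)) j k - u k\<bar>) \<longlonglongrightarrow> (\<Sum>\<^sub>\<infinity>k\<in>S. \<bar>\<mu> k - u k\<bar>)"
    by (rule tendsto_infsum_abs[OF deviation w close])
  moreover have "(\<lambda>n. \<Sum>\<^sub>\<infinity>k\<in>S. \<bar>P (real (\<sigma> n)) j k - u k\<bar>) \<longlonglongrightarrow> c"
    using LIMSEQ_subseq_LIMSEQ[OF c \<sigma>] by (simp add: o_def)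
  ultimately show "c = (\<Sum>\<^sub>\<infinity>k\<in>S. \<bar>\<mu> k - u k\<bar>)"
    using LIMSEQ_unique by blast
  interpret P1: stochastic_matrix S "P 1"
    by (rule stochastic_matrix) simp
  have "(\<lambda>n. \<Sum>\<^sub>\<infinity>k\<in>S. \<bar>P (real (\<sigma> n) + 1) j k - u k\<bar>)
      \<longlonglongrightarrow> (\<Sum>\<^sub>\<infinity>k\<in>S. \<bar>\<Sum>\<^sub>\<infinity>l\<in>S. (\<mu> l - u l) * P 1 l k\<bar>)"
    unfolding L1_deviation_add[OF _ _ j, of "real _" 1, simplified]
    by (rule P1.tendsto_L1_vecmat[OF deviation w close])
  moreover have "(\<lambda>n. \<Sum>\<^sub>\<infinity>k\<in>S. \<bar>P (real (\<sigma> n) + 1) j k - u k\<bar>) \<longlonglongrightarrow> c"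
    using LIMSEQ_subseq_LIMSEQ[OF c, of "\<lambda>n. Suc (\<sigma> n)"] \<sigma>
    by (simp add: o_def strict_mono_Suc_iff add.commute)
  ultimately show "c = (\<Sum>\<^sub>\<infinity>k\<in>S. \<bar>\<Sum>\<^sub>\<infinity>l\<in>S. (\<mu> l - u l) * P 1 l k\<bar>)"
    using LIMSEQ_unique by blast
qed

text \<open>The \<open>L\<^sup>1\<close> distance to \<open>u\<close> decreases to some \<open>c\<close>. Along a convergent subsequence with limit
  \<open>\<mu>\<close>, both \<open>\<mu> - u\<close> and its image under \<open>P 1\<close> have norm \<open>c\<close>, so the strict contraction forces
  \<open>\<mu> = u\<close> and \<open>c = 0\<close>.\<close>

theorem L1_deviation_tendsto_0:
  assumes j: "j \<in> S"
  shows "((\<lambda>t. \<Sum>\<^sub>\<infinity>k\<in>S. \<bar>P t j k - u k\<bar>) \<longlongrightarrow> 0) at_top"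
proof (rule antimono_tendsto_0_at_top)
  show "(\<Sum>\<^sub>\<infinity>k\<in>S. \<bar>P t j k - u k\<bar>) \<le> (\<Sum>\<^sub>\<infinity>k\<in>S. \<bar>P s j k - u k\<bar>)" if "0 \<le> s" "s \<le> t" for s t
    using that j by (rule L1_deviation_antimono)
  then have "decseq (\<lambda>n. \<Sum>\<^sub>\<infinity>k\<in>S. \<bar>P (real n) j k - u k\<bar>)"
    by (intro decseq_SucI) auto
  moreover have "\<forall>n. 0 \<le> (\<Sum>\<^sub>\<infinity>k\<in>S. \<bar>P (real n) j k - u k\<bar>)"
    by (simp add: infsum_nonneg)
  ultimately obtain c where c: "(\<lambda>n. \<Sum>\<^sub>\<infinity>k\<in>S. \<bar>P (real n) j k - u k\<bar>) \<longlonglongrightarrow> c"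
    using decseq_convergent by blast
  obtain \<sigma> \<mu> where \<sigma>: "strict_mono \<sigma>" and \<mu>: "\<mu> summable_on S" "infsum \<mu> S = 1"
    and L1: "(\<lambda>n. \<Sum>\<^sub>\<infinity>k\<in>S. \<bar>P (real (\<sigma> n)) j k - \<mu> k\<bar>) \<longlonglongrightarrow> 0"
    using subsequence_L1_convergent[OF j] by blast
  note c_eq = L1_deviation_subsequence_limits[OF j \<sigma> \<mu>(1) L1 c]
  have u: "u summable_on S" "infsum u S = 1"
    using stationary_has_sum by (auto dest: has_sum_imp_summable simp: infsumI)
  have w: "(\<lambda>k. \<mu> k - u k) summable_on S" "infsum (\<lambda>k. \<mu> k - u k) S = 0"
    using summable_on_diff[OF \<mu>(1) u(1)] infsum_diff[OF \<mu>(1) u(1)] \<mu>(2) u(2) by simp_all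
  interpret P1: stochastic_matrix S "P 1"
    by (rule stochastic_matrix) simp
  have "\<mu> l - u l = 0" if "l \<in> S" for l
  proof (rule ccontr)
    assume "\<mu> l - u l \<noteq> 0"
    have "(\<Sum>\<^sub>\<infinity>k\<in>S. \<bar>\<Sum>\<^sub>\<infinity>l\<in>S. (\<mu> l - u l) * P 1 l k\<bar>) < (\<Sum>\<^sub>\<infinity>k\<in>S. \<bar>\<mu> k - u k\<bar>)"
      by (rule P1.L1_strict_contraction[OF w that \<open>\<mu> l - u l \<noteq> 0\<close> j transition_pos]) (use j in auto)
    then show False
      using c_eq by simp
  qed
  then show "(\<lambda>n. \<Sum>\<^sub>\<infinity>k\<in>S. \<bar>P (real n) j k - u k\<bar>) \<longlonglongrightarrow> 0"
    using c c_eq(1) by (simp add: infsum_0)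
qed (simp add: infsum_nonneg)

lemma tendsto_transition_stationary:
  assumes "j \<in> S" "k \<in> S"
  shows "((\<lambda>t. P t j k) \<longlongrightarrow> u k) at_top"
proof -
  have "((\<lambda>t. P t j k - u k) \<longlongrightarrow> 0) at_top"
  proof (rule Lim_null_comparison[OF _ L1_deviation_tendsto_0[OF assms(1)]])
    show "\<forall>\<^sub>F t in at_top. norm (P t j k - u k) \<le> (\<Sum>\<^sub>\<infinity>k\<in>S. \<bar>P t j k - u k\<bar>)"
      using eventually_ge_at_top[of "0::real"]
    proof eventually_elim
      case (elim t)
      show ?case
        using finite_sum_le_infsum[OF summable_on_abs_real[OF summable_on_deviation], of t j "{k}"]
          elim assms by simp
    qed
  qed
  then show ?thesis
    by (simp add: LIM_zero_iff)
qed

lemma tendsto_weighted_transition_stationary: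
  assumes j: "j \<in> S" and c: "\<And>i. i \<in> S \<Longrightarrow> \<bar>c i\<bar> \<le> 1"
  shows "((\<lambda>t. \<Sum>\<^sub>\<infinity>i\<in>S. P t j i * c i) \<longlongrightarrow> (\<Sum>\<^sub>\<infinity>i\<in>S. u i * c i)) at_top"
proof -
  have weighted: "(\<lambda>i. f i * c i) summable_on S" if "f summable_on S" "\<And>i. i \<in> S \<Longrightarrow> 0 \<le> f i" for f
    using that c by (intro summable_on_abs_comparison[OF that(1)]) (simp add: abs_mult mult_left_le)
  have u: "(\<lambda>i. u i * c i) summable_on S"
    using stationary_has_sum stationary_nonneg by (intro weighted) (auto dest: has_sum_imp_summable)
  have "((\<lambda>t. (\<Sum>\<^sub>\<infinity>i\<in>S. P t j i * c i) - (\<Sum>\<^sub>\<infinity>i\<in>S. u i * c i)) \<longlongrightarrow> 0) at_top"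
  proof (rule Lim_null_comparison[OF _ L1_deviation_tendsto_0[OF j]])
    show "\<forall>\<^sub>F t in at_top. norm ((\<Sum>\<^sub>\<infinity>i\<in>S. P t j i * c i) - (\<Sum>\<^sub>\<infinity>i\<in>S. u i * c i))
        \<le> (\<Sum>\<^sub>\<infinity>k\<in>S. \<bar>P t j k - u k\<bar>)"
      using eventually_ge_at_top[of "0::real"]
    proof eventually_elim
      case (elim t)
      have P: "(\<lambda>i. P t j i * c i) summable_on S"
        using row_has_sum nonneg elim j by (intro weighted) (auto dest: has_sum_imp_summable)
      have "norm ((\<Sum>\<^sub>\<infinity>i\<in>S. P t j i * c i) - (\<Sum>\<^sub>\<infinity>i\<in>S. u i * c i))
          \<le> (\<Sum>\<^sub>\<infinity>i\<in>S. \<bar>P t j i * c i - u i * c i\<bar>)"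
        using abs_infsum_diff_le[OF P u] by simp
      also have "\<dots> \<le> (\<Sum>\<^sub>\<infinity>k\<in>S. \<bar>P t j k - u k\<bar>)"
      proof (rule infsum_mono)
        show "(\<lambda>i. \<bar>P t j i * c i - u i * c i\<bar>) summable_on S"
          by (intro summable_on_abs_real summable_on_diff P u)
        show "(\<lambda>k. \<bar>P t j k - u k\<bar>) summable_on S"
          by (intro summable_on_abs_real summable_on_deviation elim j)
        show "\<bar>P t j i * c i - u i * c i\<bar> \<le> \<bar>P t j i - u i\<bar>" if "i \<in> S" for i
          using c[OF that] by (simp add: abs_mult mult_left_le flip: left_diff_distrib)
      qed
      finally show ?case .
    qed
  qed
  then show ?thesis
    by (simp add: LIM_zero_iff)
qed

end

end

lemma tendsto_size_biased_ratio:
  assumes "irreducible_ctmc {1..} G P" "stationary_distribution {1..} P u" "1 \<le> j" "1 \<le> k"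
  shows "((\<lambda>t. P t j k / real k / (\<Sum>\<^sub>\<infinity>i\<in>{1..}. P t j i / real i))
    \<longlongrightarrow> u k / real k / (\<Sum>\<^sub>\<infinity>i\<in>{1..}. u i / real i)) at_top"
proof -
  interpret irreducible_ctmc "{1..}" G P by (fact assms(1))
  have "0 < (\<Sum>\<^sub>\<infinity>i\<in>{1..}. u i / real i)"
    by (rule infsum_div_pos[OF stationary_has_sum[OF assms(2)] stationary_nonneg[OF assms(2)]]) simp
  moreover have "((\<lambda>t. \<Sum>\<^sub>\<infinity>i\<in>{1..}. P t j i / real i) \<longlongrightarrow> (\<Sum>\<^sub>\<infinity>i\<in>{1..}. u i / real i)) at_top"
    using tendsto_weighted_transition_stationary[OF assms(2), of j "\<lambda>i. 1 / real i"] assms(3) by simp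
  ultimately show ?thesis
    using tendsto_transition_stationary[OF assms(2), of j k] assms(3,4)
    by (intro tendsto_divide tendsto_intros) auto
qed

theorem proposition5:
  fixes p :: real
    and P Pbar :: "real \<Rightarrow> nat \<Rightarrow> nat \<Rightarrow> real"
    and u :: "nat \<Rightarrow> real"
    and j k :: nat
  assumes p: "0 < p" "p \<le> 1"
    and D: "ctmc_transition UNIV (Qgen p) P"
    and Dbar: "ctmc_transition {1..} (Qbar p) Pbar"
    and u: "stationary_distribution {1..} Pbar u"
    and jk: "1 \<le> j" "1 \<le> k"
  defines "m \<equiv> (\<lambda>i. u i / real i)"
  defines "a \<equiv> (\<lambda>i. m i / infsum m {1..})"
  shows "((\<lambda>t. P t j k * exp ((1 - 2 * p) * t)) \<longlongrightarrow> real j * m k) at_top \<and>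
         ((\<lambda>t. P t j k / infsum (\<lambda>i. P t j i) {1..}) \<longlongrightarrow> a k) at_top"
proof -
  have P: "ctmc UNIV (Qgen p) P" and Pbar: "ctmc {1..} (Qbar p) Pbar"
    using D Dbar by (simp_all add: ctmc_def)
  have "p \<noteq> 1"
    using Qbar_1_no_stationary_distribution[of Pbar u] Pbar u by auto
  then have irreducible: "irreducible_ctmc {1..} (Qbar p) Pbar"
    using Qbar_irreducible[OF p(1) _ Pbar] p(2) by simp
  have lim_exp: "((\<lambda>t. real j / real k * Pbar t j k) \<longlongrightarrow> real j * m k) at_top"
    using tendsto_mult_left[OF irreducible_ctmc.tendsto_transition_stationary[OF irreducible u],
        of j k "real j / real k"] jk by (simp add: m_def)
  have lim_ratio: "((\<lambda>t. Pbar t j k / real k / (\<Sum>\<^sub>\<infinity>i\<in>{1..}. Pbar t j i / real i)) \<longlongrightarrow> a k) at_top"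
    unfolding a_def m_def by (rule tendsto_size_biased_ratio[OF irreducible u jk])
  have eq: "eventually (\<lambda>t. real j / real k * Pbar t j k = P t j k * exp ((1 - 2 * p) * t) \<and>
      Pbar t j k / real k / (\<Sum>\<^sub>\<infinity>i\<in>{1..}. Pbar t j i / real i) = P t j k / infsum (\<lambda>i. P t j i) {1..}) at_top"
    using eventually_ge_at_top[of "0::real"]
    by eventually_elim (use transition_mult_exp_eq[OF less_imp_le[OF p(1)] p(2) P Pbar jk(2)]
        transition_ratio_eq[OF less_imp_le[OF p(1)] p(2) P Pbar jk] in auto)
  show ?thesis
  proof
    show "((\<lambda>t. P t j k * exp ((1 - 2 * p) * t)) \<longlongrightarrow> real j * m k) at_top"
      by (rule Lim_transform_eventually[OF lim_exp eventually_mono[OF eq]]) (rule conjunct1)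
    show "((\<lambda>t. P t j k / infsum (\<lambda>i. P t j i) {1..}) \<longlongrightarrow> a k) at_top"
      by (rule Lim_transform_eventually[OF lim_ratio eventually_mono[OF eq]]) (rule conjunct2)
  qed
qed

end
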